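(* Let $|\psi\rangle$ be an $N$-qubit state and $|\psi'\rangle$ an $n$-qubit state with $N\ge n$, such that $|\psi\rangle$ can be transformed into $|\psi'\rangle|0\rangle^{\otimes(N-n)}$ (with $|\psi'\rangle$ on some set of $n$ of the qubits) by stochastic local operations and classical communication (SLOCC) with non-zero probability. Then $\chi_{\mathrm{wd}}(|\psi\rangle)\ge\chi_{\mathrm{wd}}(|\psi'\rangle)$. Consequently, the Schmidt-rank width is both a type I and a type II entanglement monotone.
   Context: A subcubic tree is a tree with all vertex degrees in $\{1,3\}$; its degree-1 vertices are leaves. For an $N$-qubit state $|\psi\rangle$ on $V=\{1,\dots,N\}$, consider subcubic trees $T$ with $N$ leaves identified with the qubits; deleting an edge $e$ of $T$ induces a bipartition $(A^e_T,B^e_T)$ of $V$. Let $\chi_{A,B}(|\psi\rangle)=\mathrm{rank}(\rho_A)$, $\rho_A=\mathrm{Tr}_B|\psi\rangle\langle\psi|$ (the Schmidt rank). The Schmidt-rank width is $\chi_{\mathrm{wd}}(|\psi\rangle)=\min_T\max_{e\in T}\log_2\chi_{A^e_T,B^e_T}(|\psi\rangle)$. A type I entanglement monotone is a functional $M$ such that for every LOCC protocol on $n$ qubits mapping $|\psi\rangle$ to $n$-qubit states $|\psi_i\rangle$ with probabilities $p_i$, $M(|\psi\rangle)\ge\sum_ip_iM(|\psi_i\rangle)$. Write $|\psi\rangle\geq_{\mathrm{LOCC}}|\phi\rangle$ ($N$-qubit $|\psi\rangle$, $n$-qubit $|\phi\rangle$, $n\le N$) if for some set $A$ of $n$ qubits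 $|\psi\rangle\to|\phi\rangle^A|0\rangle^{\bar A}$ is achievable exactly with probability one by LOCC; a type II entanglement monotone is a functional $E$ on all multi-qubit states with $E(|\psi\rangle)\ge E(|\psi'\rangle)$ whenever $|\psi\rangle\geq_{\mathrm{LOCC}}|\psi'\rangle$. *)

theory Defs
  imports "HOL-Analysis.Analysis" "HOL-Library.Function_Algebras"
begin

text \<open>Qubits of an n-qubit system are labelled 0,...,n-1.  A classical configuration
  (computational basis vector) of a finite set S of qubits is an extensional function
  S ->E bool.  An n-qubit (unnormalised) vector is a map from configurations to amplitudes;
  only its values on cfg {0..<n} matter.\<close>

type_synonym config = "nat \<Rightarrow> bool"
type_synonym qvec = "config \<Rightarrow> complex"

definition cfg :: "nat set \<Rightarrow> config set" where
  "cfg S = S \<rightarrow>\<^sub>E (UNIV :: bool set)"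

definition norm2 :: "nat \<Rightarrow> qvec \<Rightarrow> real" where
  "norm2 n psi = (\<Sum>x\<in>cfg {0..<n}. (cmod (psi x))\<^sup>2)"

definition qstate :: "nat \<Rightarrow> qvec \<Rightarrow> bool" where
  "qstate n psi \<longleftrightarrow> norm2 n psi = 1"

definition merge :: "nat set \<Rightarrow> config \<Rightarrow> config \<Rightarrow> config" where
  "merge A x y = (\<lambda>i. if i \<in> A then x i else y i)"

text \<open>rho_A = Tr_B |psi><psi| for the bipartition (A, {0..<n} - A), as a kernel on cfg A.\<close>
definition rho :: "nat \<Rightarrow> nat set \<Rightarrow> qvec \<Rightarrow> config \<Rightarrow> config \<Rightarrow> complex" where
  "rho n A psi x x' =
     (if x \<in> cfg A \<and> x' \<in> cfg A then
        (\<Sum>y\<in>cfg ({0..<n} - A). psi (merge A x y) * cnj (psi (merge A x' y)))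
      else 0)"

text \<open>The rank of rho_A: the complex dimension of its column space (= range of the operator).\<close>
definition cscale :: "complex \<Rightarrow> (config \<Rightarrow> complex) \<Rightarrow> (config \<Rightarrow> complex)" where
  "cscale c f = (\<lambda>x. c * f x)"

definition schmidt_rank :: "nat \<Rightarrow> nat set \<Rightarrow> qvec \<Rightarrow> nat" where
  "schmidt_rank n A psi =
     vector_space.dim cscale {(\<lambda>x. rho n A psi x x') | x'. x' \<in> cfg A}"

text \<open>A tree with leaf labelling: vertex set, set of edges (2-element vertex sets),
  and a map from the qubits {0..<n} to the vertices.\<close>
type_synonym ltree = "nat set \<times> nat set set \<times> (nat \<Rightarrow> nat)"

definition adj :: "nat set set \<Rightarrow> (nat \<times> nat) set" where
  "adj E = {(u, v). {u, v} \<in> E}"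

definition degree :: "nat set set \<Rightarrow> nat \<Rightarrow> nat" where
  "degree E v = card {e \<in> E. v \<in> e}"

definition is_tree :: "nat set \<Rightarrow> nat set set \<Rightarrow> bool" where
  "is_tree Vt E \<longleftrightarrow> finite Vt \<and> Vt \<noteq> {} \<and>
     (\<forall>e\<in>E. e \<subseteq> Vt \<and> card e = 2) \<and>
     (\<forall>u\<in>Vt. \<forall>v\<in>Vt. (u, v) \<in> (adj E)\<^sup>*) \<and>
     card E + 1 = card Vt"

definition subcubic_tree :: "nat \<Rightarrow> ltree \<Rightarrow> bool" where
  "subcubic_tree n T = (case T of (Vt, E, lf) \<Rightarrow>
     is_tree Vt E \<and> (\<forall>v\<in>Vt. degree E v \<in> {1, 3}) \<and>
     bij_betw lf {0..<n} {v \<in> Vt. degree E v = 1})"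

definition tree_edges :: "ltree \<Rightarrow> nat set set" where
  "tree_edges T = fst (snd T)"

text \<open>Deleting edge e splits the tree in two components; A^e_T is the set of qubits whose
  leaf lies in the component of the endpoint Min e (the complementary side gives the same
  Schmidt rank).\<close>
definition cut_side :: "nat \<Rightarrow> ltree \<Rightarrow> nat set \<Rightarrow> nat set" where
  "cut_side n T e = (case T of (Vt, E, lf) \<Rightarrow>
     {i \<in> {0..<n}. (Min e, lf i) \<in> (adj (E - {e}))\<^sup>*})"

text \<open>Schmidt-rank width (defined for n >= 2, where subcubic trees with n leaves exist).\<close>
definition srw :: "nat \<Rightarrow> qvec \<Rightarrow> real" where
  "srw n psi = Min {Max {log 2 (real (schmidt_rank n (cut_side n T e) psi)) | e. e \<in> tree_edges T}
                    | T. subcubic_tree n T}"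

type_synonym op1 = "bool \<Rightarrow> bool \<Rightarrow> complex"

definition apply_prod :: "nat \<Rightarrow> (nat \<Rightarrow> op1) \<Rightarrow> qvec \<Rightarrow> qvec" where
  "apply_prod N K psi =
     (\<lambda>x. \<Sum>y\<in>cfg {0..<N}. (\<Prod>i<N. K i (x i) (y i)) * psi y)"

text \<open>The N-qubit vector |psi'>^S |0>^{rest}: the n-qubit state psi' placed on the qubits
  sg 0, ..., sg (n-1) (sg a bijection from {0..<n} onto S), all other qubits in |0>
  (bit value False).\<close>
definition embed :: "nat \<Rightarrow> nat \<Rightarrow> (nat \<Rightarrow> nat) \<Rightarrow> qvec \<Rightarrow> qvec" where
  "embed N n sg psi' =
     (\<lambda>x. if (\<forall>i\<in>{0..<N} - sg ` {0..<n}. x i = False)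
          then psi' (restrict (\<lambda>j. x (sg j)) {0..<n}) else 0)"

definition slocc_to :: "nat \<Rightarrow> qvec \<Rightarrow> nat \<Rightarrow> qvec \<Rightarrow> bool" where
  "slocc_to N psi n psi' \<longleftrightarrow>
     (\<exists>K sg c. c \<noteq> 0 \<and> inj_on sg {0..<n} \<and> sg ` {0..<n} \<subseteq> {0..<N} \<and>
        (\<forall>x\<in>cfg {0..<N}. apply_prod N K psi x = c * embed N n sg psi' x))"

definition apply_local :: "nat \<Rightarrow> op1 \<Rightarrow> qvec \<Rightarrow> qvec" where
  "apply_local k K psi = (\<lambda>x. \<Sum>b\<in>(UNIV :: bool set). K (x k) b * psi (x(k := b)))"

definition kraus_complete :: "op1 list \<Rightarrow> bool" where
  "kraus_complete Ks \<longleftrightarrow>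
     (\<forall>a b. (\<Sum>K\<leftarrow>Ks. \<Sum>c\<in>(UNIV :: bool set). cnj (K c a) * K c b) = (if a = b then 1 else 0))"

definition normalize :: "nat \<Rightarrow> qvec \<Rightarrow> qvec" where
  "normalize n v = (\<lambda>x. v x / complex_of_real (sqrt (norm2 n v)))"

text \<open>locc n psi L: L is the list of (probability, post-measurement state) outcomes of a
  (finite-round) LOCC protocol on n qubits started in psi.  In each round one party (qubit k)
  performs a local measurement with Kraus operators Ks, announces the outcome j, and the
  rest of the protocol may depend on all previous outcomes.\<close>
inductive locc :: "nat \<Rightarrow> qvec \<Rightarrow> (real \<times> qvec) list \<Rightarrow> bool" for n where
  locc_stop: "qstate n psi \<Longrightarrow> locc n psi [(1, psi)]"
| locc_round: "\<lbrakk> qstate n psi; k < n; kraus_complete Ks;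
     \<forall>j<length Ks. norm2 n (apply_local k (Ks ! j) psi) > 0 \<longrightarrow>
        locc n (normalize n (apply_local k (Ks ! j) psi)) (Ls j) \<rbrakk>
   \<Longrightarrow> locc n psi
        (concat (map (\<lambda>j. if norm2 n (apply_local k (Ks ! j) psi) > 0
                          then map (\<lambda>(q, phi). (norm2 n (apply_local k (Ks ! j) psi) * q, phi)) (Ls j)
                          else []) [0..<length Ks]))"

text \<open>psi >=_LOCC psi': some LOCC protocol turns psi into psi'|0>^{rest} (up to an irrelevant
  global phase) in every branch, i.e. exactly with probability one.\<close>
definition locc_geq :: "nat \<Rightarrow> qvec \<Rightarrow> nat \<Rightarrow> qvec \<Rightarrow> bool" where
  "locc_geq N psi n psi' \<longleftrightarrow>
     n \<le> N \<and> (\<exists>sg L. inj_on sg {0..<n} \<and> sg ` {0..<n} \<subseteq> {0..<N} \<and> locc N psi L \<and>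
        (\<forall>(p, phi)\<in>set L. \<exists>c. cmod c = 1 \<and>
            (\<forall>x\<in>cfg {0..<N}. phi x = c * embed N n sg psi' x)))"

text \<open>Functionals on multi-qubit states are maps M n psi.  Since the Schmidt-rank width is only
  defined for at least two qubits, the monotone conditions are required for n >= 2.\<close>
definition type_I_monotone :: "(nat \<Rightarrow> qvec \<Rightarrow> real) \<Rightarrow> bool" where
  "type_I_monotone M \<longleftrightarrow>
     (\<forall>n psi L. 2 \<le> n \<longrightarrow> locc n psi L \<longrightarrow>
        M n psi \<ge> (\<Sum>(p, phi)\<leftarrow>L. p * M n phi))"

definition type_II_monotone :: "(nat \<Rightarrow> qvec \<Rightarrow> real) \<Rightarrow> bool" where
  "type_II_monotone E \<longleftrightarrow>
     (\<forall>N psi n psi'. 2 \<le> n \<longrightarrow> qstate N psi \<longrightarrow> qstate n psi' \<longrightarrow> locc_geq N psi n psi' \<longrightarrow>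
        E N psi \<ge> E n psi')"

end

theory Submission
  imports Defs
begin

text \<open>Across a bipartition \<open>(A, B)\<close> of the qubits, the Schmidt rank of a state is the least \<open>r\<close>
  for which its amplitude, as a function of a configuration of \<open>A\<close> and one of \<open>B\<close>, is a sum of
  \<open>r\<close> products: the columns of \<open>\<rho>\<^sub>A = M M\<^sup>\<dagger>\<close> span the same space as those of the amplitude
  matrix \<open>M\<close>. A product of local operators acts on the two factors of each term separately, so
  SLOCC, and every branch of an LOCC protocol, can only lower Schmidt ranks.
  For the width, take an optimal subcubic tree for \<open>\<psi>'|0\<dots>0\<rangle>\<close>. Deleting the leaves of the
  ancilla qubits one by one, each time suppressing the vertex of degree 2 left behind, yields a
  subcubic tree on the qubits of \<open>\<psi>'\<close> each of whose cuts is, up to complement, the trace of a cut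
  of the original tree; across it \<open>\<psi>'\<close> has Schmidt rank at most that of \<open>\<psi>'|0\<dots>0\<rangle>\<close>. Averaging
  the bound for each branch of an LOCC protocol against the outcome probabilities gives the
  type I inequality.\<close>

section \<open>Schmidt rank and product decompositions\<close>

interpretation cvs: vector_space cscale
  by unfold_locales (auto simp: cscale_def fun_eq_iff algebra_simps)

lemma sum_fun_apply: "(\<Sum>k\<in>K. f k) x = (\<Sum>k\<in>K. f k x)"
  by (induction K rule: infinite_finite_induct) auto

lemma mem_cfg_iff: "x \<in> cfg S \<longleftrightarrow> (\<forall>i. i \<notin> S \<longrightarrow> x i = undefined)"
  by (auto simp: cfg_def PiE_iff extensional_def)

lemma finite_cfg: "finite S \<Longrightarrow> finite (cfg S)"
  unfolding cfg_def by (intro finite_PiE) auto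

lemma card_cfg: "finite S \<Longrightarrow> card (cfg S) = 2 ^ card S"
  by (simp add: cfg_def card_PiE card_UNIV_bool)

lemma merge_in_cfg: "x \<in> cfg A \<Longrightarrow> y \<in> cfg B \<Longrightarrow> merge A x y \<in> cfg (A \<union> B)"
  unfolding mem_cfg_iff merge_def by auto

lemma merge_compl:
  "A \<subseteq> S \<Longrightarrow> x \<in> cfg A \<Longrightarrow> y \<in> cfg (S - A) \<Longrightarrow> merge A x y = merge (S - A) y x"
  unfolding mem_cfg_iff merge_def by (auto simp: fun_eq_iff)

lemma bij_betw_merge:
  assumes "A \<subseteq> S"
  shows "bij_betw (\<lambda>(x, y). merge A x y) (cfg A \<times> cfg (S - A)) (cfg S)"
proof (rule bij_betw_imageI)
  show "inj_on (\<lambda>(x, y). merge A x y) (cfg A \<times> cfg (S - A))"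
  proof (rule inj_onI, clarify)
    fix x y x' y'
    assume "x \<in> cfg A" "y \<in> cfg (S - A)" "x' \<in> cfg A" "y' \<in> cfg (S - A)"
      and eq: "merge A x y = merge A x' y'"
    then show "x = x' \<and> y = y'"
      using fun_cong[OF eq] by (auto simp: fun_eq_iff merge_def mem_cfg_iff) metis+
  qed
  show "(\<lambda>(x, y). merge A x y) ` (cfg A \<times> cfg (S - A)) = cfg S"
  proof
    show "(\<lambda>(x, y). merge A x y) ` (cfg A \<times> cfg (S - A)) \<subseteq> cfg S"
      using merge_in_cfg[of _ A _ "S - A"] by (auto simp: Un_absorb1[OF assms])
    show "cfg S \<subseteq> (\<lambda>(x, y). merge A x y) ` (cfg A \<times> cfg (S - A))"
    proof
      fix z assume "z \<in> cfg S"
      then have "z = merge A (restrict z A) (restrict z (S - A))"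
        using assms by (auto simp: merge_def mem_cfg_iff fun_eq_iff)
      moreover have "(restrict z A, restrict z (S - A)) \<in> cfg A \<times> cfg (S - A)"
        by (auto simp: cfg_def)
      ultimately show "z \<in> (\<lambda>(x, y). merge A x y) ` (cfg A \<times> cfg (S - A))"
        by (metis (no_types, lifting) case_prod_conv image_eqI)
    qed
  qed
qed

lemma sum_cfg_merge:
  assumes "A \<subseteq> S"
  shows "(\<Sum>z\<in>cfg S. F z) = (\<Sum>x\<in>cfg A. \<Sum>y\<in>cfg (S - A). F (merge A x y))"
  by (simp add: sum.reindex_bij_betw[OF bij_betw_merge[OF assms], symmetric]
      sum.cartesian_product split_def)

lemma sum_cfg_insert:
  assumes "k \<notin> S"
  shows "(\<Sum>z\<in>cfg (insert k S). F z) = (\<Sum>c\<in>UNIV. \<Sum>y\<in>cfg S. F (y(k := c)))"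
proof -
  have inj: "inj_on (\<lambda>(c, y). y(k := c)) (UNIV \<times> cfg S)"
    using inj_combinator[OF assms, of "\<lambda>_. UNIV"] by (simp add: cfg_def)
  have img: "cfg (insert k S) = (\<lambda>(c, y). y(k := c)) ` (UNIV \<times> cfg S)"
    using PiE_insert_eq[of k S "\<lambda>_. UNIV"] by (simp add: cfg_def)
  have "F \<circ> (\<lambda>(c, y). y(k := c)) = (\<lambda>(c, y). F (y(k := c)))" by (auto simp: fun_eq_iff)
  then show ?thesis unfolding img sum.reindex[OF inj] sum.cartesian_product by simp
qed

definition product_decomp :: "nat \<Rightarrow> nat set \<Rightarrow> qvec \<Rightarrow> nat \<Rightarrow> bool" where
  "product_decomp n A v r \<longleftrightarrow> (\<exists>a b. \<forall>x\<in>cfg A. \<forall>y\<in>cfg ({0..<n} - A).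
      v (merge A x y) = (\<Sum>k<r. a k x * b k y))"

lemma product_decompE:
  assumes "product_decomp n A v r"
  obtains a b where "\<And>x y. x \<in> cfg A \<Longrightarrow> y \<in> cfg ({0..<n} - A) \<Longrightarrow>
    v (merge A x y) = (\<Sum>k<r. a k x * b k y)"
  using assms unfolding product_decomp_def by blast

lemma product_decompI:
  assumes "\<And>x y. x \<in> cfg A \<Longrightarrow> y \<in> cfg ({0..<n} - A) \<Longrightarrow> v (merge A x y) = (\<Sum>k<r. a k x * b k y)"
  shows "product_decomp n A v r"
  using assms unfolding product_decomp_def by blast

lemma product_decomp_mono:
  assumes "product_decomp n A v r" and "r \<le> s"
  shows "product_decomp n A v s"
proof -
  obtain a b where ab: "\<And>x y. x \<in> cfg A \<Longrightarrow> y \<in> cfg ({0..<n} - A) \<Longrightarrow>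
      v (merge A x y) = (\<Sum>k<r. a k x * b k y)"
    using assms(1) by (elim product_decompE) blast
  show ?thesis
  proof (rule product_decompI)
    fix x y assume "x \<in> cfg A" "y \<in> cfg ({0..<n} - A)"
    have "(\<Sum>k<s. (if k < r then a k else 0) x * b k y) = (\<Sum>k<r. (if k < r then a k else 0) x * b k y)"
      using assms(2) by (intro sum.mono_neutral_right) auto
    then show "v (merge A x y) = (\<Sum>k<s. (\<lambda>k. if k < r then a k else 0) k x * b k y)"
      using ab[OF \<open>x \<in> _\<close> \<open>y \<in> _\<close>] by simp
  qed
qed

lemma schmidt_rank_le_of_product_decomp:
  assumes "product_decomp n A v r"
  shows "schmidt_rank n A v \<le> r"
proof -
  obtain a b where ab: "\<And>x y. x \<in> cfg A \<Longrightarrow> y \<in> cfg ({0..<n} - A) \<Longrightarrow>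
      v (merge A x y) = (\<Sum>k<r. a k x * b k y)"
    using assms by (elim product_decompE) blast
  define a' where "a' k x = (if x \<in> cfg A then a k x else 0)" for k x
  let ?B = "cfg ({0..<n} - A)"
  have column: "(\<lambda>x. rho n A v x x') \<in> cvs.span (a' ` {..<r})" if x': "x' \<in> cfg A" for x'
  proof -
    define c where "c k = (\<Sum>y\<in>?B. b k y * cnj (v (merge A x' y)))" for k
    have "(\<lambda>x. rho n A v x x') = (\<Sum>k<r. cscale (c k) (a' k))"
    proof
      fix x
      show "rho n A v x x' = (\<Sum>k<r. cscale (c k) (a' k)) x"
      proof (cases "x \<in> cfg A")
        case True
        have "rho n A v x x' = (\<Sum>y\<in>?B. (\<Sum>k<r. a k x * b k y) * cnj (v (merge A x' y)))"
          using True x' by (simp add: rho_def ab)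
        also have "\<dots> = (\<Sum>k<r. a k x * c k)"
          by (simp add: c_def sum_distrib_left sum_distrib_right mult.assoc sum.swap[of _ "{..<r}"])
        finally show ?thesis
          using True by (simp add: sum_fun_apply cscale_def a'_def mult.commute)
      qed (simp add: rho_def sum_fun_apply cscale_def a'_def)
    qed
    also have "\<dots> \<in> cvs.span (a' ` {..<r})"
      by (intro cvs.span_sum cvs.span_scale cvs.span_base) auto
    finally show ?thesis .
  qed
  have "schmidt_rank n A v \<le> card (a' ` {..<r})"
    unfolding schmidt_rank_def by (rule cvs.dim_le_card) (use column in auto)
  also have "\<dots> \<le> r" using card_image_le[of "{..<r}" a'] by simp
  finally show ?thesis .
qed

definition cinner :: "nat set \<Rightarrow> (config \<Rightarrow> complex) \<Rightarrow> (config \<Rightarrow> complex) \<Rightarrow> complex" where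
  "cinner A f g = (\<Sum>x\<in>cfg A. cnj (f x) * g x)"

lemma cinner_span_eq_0:
  assumes "f \<in> cvs.span S" and "\<And>s. s \<in> S \<Longrightarrow> cinner A s g = 0"
  shows "cinner A f g = 0"
  using assms(1)
proof (induction rule: cvs.span_induct_alt)
  case (step c x y)
  have "cinner A (cscale c x + y) g = cnj c * cinner A x g + cinner A y g"
    by (simp add: cinner_def cscale_def sum.distrib sum_distrib_left algebra_simps)
  then show ?case using step assms(2) by (simp add: plus_fun_def)
qed (simp add: cinner_def)

lemma cinner_self_eq_0D:
  assumes "finite A" and "cinner A f f = 0" and "x \<in> cfg A"
  shows "f x = 0"
proof -
  have "cnj (f x) * f x = complex_of_real ((cmod (f x))\<^sup>2)" for x
    using complex_norm_square[of "f x"] by (simp add: mult.commute)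
  then have "cinner A f f = complex_of_real (\<Sum>x\<in>cfg A. (cmod (f x))\<^sup>2)"
    unfolding cinner_def of_real_sum by simp
  then have "(\<Sum>x\<in>cfg A. (cmod (f x))\<^sup>2) = 0" using assms(2) by (metis of_real_eq_0_iff)
  then show ?thesis
    using sum_nonneg_eq_0_iff[OF finite_cfg[OF assms(1)], of "\<lambda>x. (cmod (f x))\<^sup>2"] assms(3) by simp
qed

lemma exists_orthogonal_residual:
  assumes "finite S" and "finite A"
  shows "\<exists>p\<in>cvs.span S. \<forall>s\<in>S. cinner A s (g - p) = 0"
  using assms(1)
proof (induction S arbitrary: g rule: finite_induct)
  case empty
  then show ?case by (auto intro: cvs.span_zero)
next
  case (insert s S)
  obtain ps where ps: "ps \<in> cvs.span S" "\<And>s'. s' \<in> S \<Longrightarrow> cinner A s' (s - ps) = 0"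
    using insert.IH[of s] by blast
  obtain p0 where p0: "p0 \<in> cvs.span S" "\<And>s'. s' \<in> S \<Longrightarrow> cinner A s' (g - p0) = 0"
    using insert.IH[of g] by blast
  define r where "r = s - ps"
  have span_S: "cvs.span S \<subseteq> cvs.span (insert s S)" by (rule cvs.span_mono) auto
  have r_span: "r \<in> cvs.span (insert s S)"
    unfolding r_def using span_S ps(1) by (intro cvs.span_diff) (auto intro: cvs.span_base)
  have split: "cinner A s h = cinner A r h + cinner A ps h" for h
    unfolding cinner_def sum.distrib[symmetric] by (rule sum.cong) (auto simp: r_def algebra_simps)
  show ?case
  proof (cases "cinner A r r = 0")
    case True
    then have "cinner A r h = 0" for h
      using cinner_self_eq_0D[OF assms(2) True] by (simp add: cinner_def)
    then have "cinner A s (g - p0) = 0"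
      using split cinner_span_eq_0[OF ps(1) p0(2)] by simp
    then show ?thesis using p0 span_S by blast
  next
    case False
    define c where "c = cinner A r (g - p0) / cinner A r r"
    define p where "p = p0 + cscale c r"
    have p: "cinner A f (g - p) = cinner A f (g - p0) - c * cinner A f r" for f
      by (simp add: p_def cinner_def cscale_def sum_subtractf sum_distrib_left sum.distrib algebra_simps)
    have "p \<in> cvs.span (insert s S)"
      unfolding p_def using span_S p0(1) r_span by (intro cvs.span_add cvs.span_scale) auto
    moreover have S: "cinner A s' (g - p) = 0" if "s' \<in> S" for s'
      using p[of s'] p0(2)[OF that] ps(2)[OF that] by (simp add: r_def)
    moreover have "cinner A s (g - p) = 0"
      using split p[of r] False cinner_span_eq_0[OF ps(1) S] by (simp add: c_def)
    ultimately show ?thesis by blast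
  qed
qed

lemma span_vanishes:
  assumes "f \<in> cvs.span C" and "\<And>c. c \<in> C \<Longrightarrow> c x = 0"
  shows "f x = 0"
  using assms(1) by (induction rule: cvs.span_induct_alt) (simp_all add: assms(2) cscale_def)

definition slice :: "nat set \<Rightarrow> qvec \<Rightarrow> config \<Rightarrow> config \<Rightarrow> complex" where
  "slice A v y = (\<lambda>x. if x \<in> cfg A then v (merge A x y) else 0)"

lemma schmidt_rank_eq_dim:
  "schmidt_rank n A v = cvs.dim ((\<lambda>x' x. rho n A v x x') ` cfg A)"
  unfolding schmidt_rank_def by (simp add: setcompr_eq_image)

lemma cinner_slice_eq_0:
  assumes orth: "\<And>x'. x' \<in> cfg A \<Longrightarrow> cinner A (\<lambda>x. rho n A v x x') h = 0"
    and y: "y \<in> cfg ({0..<n} - A)"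
  shows "cinner A (slice A v y) h = 0"
proof -
  let ?B = "{0..<n} - A"
  define t where "t y' = cinner A (slice A v y') h" for y'
  have t: "(\<Sum>y'\<in>cfg ?B. v (merge A x' y') * t y') = 0" if x': "x' \<in> cfg A" for x'
  proof -
    have "cinner A (\<lambda>x. rho n A v x x') h =
        (\<Sum>x\<in>cfg A. (\<Sum>y'\<in>cfg ?B. cnj (v (merge A x y')) * v (merge A x' y')) * h x)"
      unfolding cinner_def by (rule sum.cong) (auto simp: rho_def x' cnj_sum)
    also have "\<dots> = (\<Sum>y'\<in>cfg ?B. v (merge A x' y') * t y')"
      by (simp add: t_def cinner_def slice_def sum_distrib_left sum_distrib_right
          sum.swap[of _ "cfg A"] algebra_simps)
    finally show ?thesis using orth[OF x'] by simp
  qed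
  have "cinner ?B t t = (\<Sum>y'\<in>cfg ?B. (\<Sum>x\<in>cfg A. v (merge A x y') * cnj (h x)) * t y')"
    unfolding cinner_def by (rule sum.cong) (auto simp: t_def cinner_def slice_def cnj_sum)
  also have "\<dots> = (\<Sum>x\<in>cfg A. cnj (h x) * (\<Sum>y'\<in>cfg ?B. v (merge A x y') * t y'))"
    by (simp add: sum_distrib_left sum_distrib_right sum.swap[of _ "cfg A"] algebra_simps)
  also have "\<dots> = 0" using t by simp
  finally have "cinner ?B t t = 0" .
  with y have "t y = 0" by (intro cinner_self_eq_0D) simp_all
  then show ?thesis by (simp add: t_def)
qed

lemma slice_in_span_columns:
  assumes A: "A \<subseteq> {0..<n}" and y: "y \<in> cfg ({0..<n} - A)"
  shows "slice A v y \<in> cvs.span ((\<lambda>x' x. rho n A v x x') ` cfg A)"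
proof -
  let ?C = "(\<lambda>x' x. rho n A v x x') ` cfg A"
  have fin: "finite A" using A finite_subset by blast
  obtain p where p: "p \<in> cvs.span ?C" and orth: "\<And>c. c \<in> ?C \<Longrightarrow> cinner A c (slice A v y - p) = 0"
    using exists_orthogonal_residual[OF finite_imageI[OF finite_cfg[OF fin]] fin] by blast
  let ?h = "slice A v y - p"
  have "cinner A ?h ?h = cinner A (slice A v y) ?h - cinner A p ?h"
    unfolding cinner_def sum_subtractf[symmetric] by (rule sum.cong) (auto simp: algebra_simps)
  also have "\<dots> = 0"
    using cinner_slice_eq_0[OF _ y] cinner_span_eq_0[OF p] orth by simp
  finally have "cinner A ?h ?h = 0" .
  have "slice A v y x = p x" for x
  proof (cases "x \<in> cfg A")
    case True
    then show ?thesis using cinner_self_eq_0D[OF fin \<open>cinner A ?h ?h = 0\<close>] by simp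
  next
    case False
    then have "p x = 0" by (intro span_vanishes[OF p]) (auto simp: rho_def)
    then show ?thesis using False by (simp add: slice_def)
  qed
  then have "slice A v y = p" ..
  then show ?thesis using p by simp
qed

lemma product_decomp_schmidt_rank:
  assumes A: "A \<subseteq> {0..<n}"
  shows "product_decomp n A v (schmidt_rank n A v)"
proof -
  let ?C = "(\<lambda>x' x. rho n A v x x') ` cfg A"
  have "finite ?C" using finite_cfg finite_subset[OF A] by blast
  obtain Bs where Bs: "Bs \<subseteq> ?C" "?C \<subseteq> cvs.span Bs" "card Bs = cvs.dim ?C"
    by (rule cvs.basis_exists[of ?C])
  have "finite Bs" using Bs(1) \<open>finite ?C\<close> finite_subset by blast
  obtain f where f: "bij_betw f {..<card Bs} Bs"
    using ex_bij_betw_nat_finite[OF \<open>finite Bs\<close>] by (auto simp: atLeast0LessThan)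
  have "\<exists>u. slice A v y = (\<Sum>w\<in>Bs. cscale (u w) w)" if "y \<in> cfg ({0..<n} - A)" for y
  proof -
    have "cvs.span ?C \<subseteq> cvs.span Bs" using Bs(2) cvs.span_mono cvs.span_span by blast
    then have "slice A v y \<in> cvs.span Bs" using slice_in_span_columns[OF A that] by blast
    then show ?thesis unfolding cvs.span_finite[OF \<open>finite Bs\<close>] by blast
  qed
  then obtain U where U: "\<And>y. y \<in> cfg ({0..<n} - A) \<Longrightarrow> slice A v y = (\<Sum>w\<in>Bs. cscale (U y w) w)"
    by (metis (no_types))
  show ?thesis
    unfolding schmidt_rank_eq_dim Bs(3)[symmetric]
  proof (rule product_decompI)
    fix x y assume x: "x \<in> cfg A" and y: "y \<in> cfg ({0..<n} - A)"
    have "v (merge A x y) = (\<Sum>w\<in>Bs. U y w * w x)"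
      using fun_cong[OF U[OF y], of x] x by (simp add: slice_def sum_fun_apply cscale_def)
    also have "\<dots> = (\<Sum>k<card Bs. f k x * U y (f k))"
      using sum.reindex_bij_betw[OF f, of "\<lambda>w. U y w * w x"] by (simp add: mult.commute)
    finally show "v (merge A x y) = (\<Sum>k<card Bs. f k x * (\<lambda>k y. U y (f k)) k y)" by simp
  qed
qed

lemma schmidt_rank_le_iff:
  assumes "A \<subseteq> {0..<n}"
  shows "schmidt_rank n A v \<le> r \<longleftrightarrow> product_decomp n A v r"
  using product_decomp_mono[OF product_decomp_schmidt_rank[OF assms]] schmidt_rank_le_of_product_decomp
  by blast

lemma schmidt_rank_le_by_product_decomp:
  assumes "A \<subseteq> {0..<n}" and "\<And>r. product_decomp n A v r \<Longrightarrow> product_decomp n A w r"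
  shows "schmidt_rank n A w \<le> schmidt_rank n A v"
  using assms schmidt_rank_le_iff by blast

lemma product_decomp_compl:
  assumes A: "A \<subseteq> {0..<n}" and "product_decomp n A v r"
  shows "product_decomp n ({0..<n} - A) v r"
proof -
  obtain a b where ab: "\<And>x y. x \<in> cfg A \<Longrightarrow> y \<in> cfg ({0..<n} - A) \<Longrightarrow>
      v (merge A x y) = (\<Sum>k<r. a k x * b k y)"
    using assms(2) by (elim product_decompE) blast
  have compl: "{0..<n} - ({0..<n} - A) = A" using A by auto
  show ?thesis
  proof (rule product_decompI, unfold compl)
    fix x y assume "x \<in> cfg ({0..<n} - A)" and "y \<in> cfg A"
    then show "v (merge ({0..<n} - A) x y) = (\<Sum>k<r. b k x * a k y)"
      using ab merge_compl[OF A] by (simp add: mult.commute)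
  qed
qed

lemma schmidt_rank_compl:
  assumes "A \<subseteq> {0..<n}"
  shows "schmidt_rank n ({0..<n} - A) v = schmidt_rank n A v"
proof (rule antisym)
  show "schmidt_rank n ({0..<n} - A) v \<le> schmidt_rank n A v"
    using product_decomp_compl[OF assms product_decomp_schmidt_rank[OF assms]]
    by (rule schmidt_rank_le_of_product_decomp)
  have "{0..<n} - ({0..<n} - A) = A" using assms by auto
  then show "schmidt_rank n A v \<le> schmidt_rank n ({0..<n} - A) v"
    using product_decomp_compl[OF _ product_decomp_schmidt_rank, of "{0..<n} - A" n v]
    by (simp add: schmidt_rank_le_of_product_decomp)
qed

lemma schmidt_rank_cong:
  assumes "A \<subseteq> {0..<n}" and "\<And>z. z \<in> cfg {0..<n} \<Longrightarrow> v z = w z"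
  shows "schmidt_rank n A v = schmidt_rank n A w"
proof -
  have "merge A x y \<in> cfg {0..<n}" if "x \<in> cfg A" "y \<in> cfg ({0..<n} - A)" for x y
    using merge_in_cfg[OF that] assms(1) by (simp add: Un_absorb1)
  then have "rho n A v = rho n A w"
    by (auto simp: fun_eq_iff rho_def assms(2) intro!: sum.cong)
  then show ?thesis by (simp add: schmidt_rank_def)
qed

lemma schmidt_rank_scale_le:
  assumes "A \<subseteq> {0..<n}"
  shows "schmidt_rank n A (\<lambda>z. c * v z) \<le> schmidt_rank n A v"
proof (rule schmidt_rank_le_by_product_decomp[OF assms])
  fix r assume "product_decomp n A v r"
  then obtain a b where ab: "\<And>x y. x \<in> cfg A \<Longrightarrow> y \<in> cfg ({0..<n} - A) \<Longrightarrow>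
      v (merge A x y) = (\<Sum>k<r. a k x * b k y)"
    by (elim product_decompE) blast
  show "product_decomp n A (\<lambda>z. c * v z) r"
  proof (rule product_decompI)
    fix x y assume "x \<in> cfg A" "y \<in> cfg ({0..<n} - A)"
    then show "c * v (merge A x y) = (\<Sum>k<r. (\<lambda>k x. c * a k x) k x * b k y)"
      using ab by (simp add: sum_distrib_left mult.assoc)
  qed
qed

lemma schmidt_rank_scale:
  assumes "A \<subseteq> {0..<n}" and "c \<noteq> 0"
  shows "schmidt_rank n A (\<lambda>z. c * v z) = schmidt_rank n A v"
  using schmidt_rank_scale_le[OF assms(1), of c v]
    schmidt_rank_scale_le[OF assms(1), of "inverse c" "\<lambda>z. c * v z"] assms(2)
  by (simp add: mult.assoc[symmetric])

lemma schmidt_rank_le_pow2: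
  assumes "A \<subseteq> {0..<n}"
  shows "schmidt_rank n A v \<le> 2 ^ n"
proof -
  have fin: "finite A" using assms finite_subset by blast
  have "schmidt_rank n A v \<le> card ((\<lambda>x' x. rho n A v x x') ` cfg A)"
    unfolding schmidt_rank_eq_dim by (rule cvs.dim_le_card) (auto intro: cvs.span_base finite_cfg[OF fin])
  also have "\<dots> \<le> card (cfg A)" by (rule card_image_le[OF finite_cfg[OF fin]])
  also have "\<dots> \<le> 2 ^ n" using card_cfg[OF fin] card_mono[OF _ assms] by simp
  finally show ?thesis .
qed

section \<open>Local operators\<close>

lemma product_decomp_apply_local:
  assumes k: "k \<in> A" and "product_decomp n A v r"
  shows "product_decomp n A (apply_local k K v) r"
proof -
  obtain a b where ab: "\<And>x y. x \<in> cfg A \<Longrightarrow> y \<in> cfg ({0..<n} - A) \<Longrightarrow>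
      v (merge A x y) = (\<Sum>j<r. a j x * b j y)"
    using assms(2) by (elim product_decompE) blast
  show ?thesis
  proof (rule product_decompI)
    fix x y assume x: "x \<in> cfg A" and y: "y \<in> cfg ({0..<n} - A)"
    have m: "(merge A x y)(k := c) = merge A (x(k := c)) y" for c
      using k by (auto simp: merge_def fun_eq_iff)
    have xc: "x(k := c) \<in> cfg A" for c using x k by (auto simp: mem_cfg_iff)
    have "apply_local k K v (merge A x y) = (\<Sum>c\<in>UNIV. K (x k) c * (\<Sum>j<r. a j (x(k := c)) * b j y))"
      unfolding apply_local_def m using ab[OF xc y] k by (simp add: merge_def)
    also have "\<dots> = (\<Sum>j<r. (\<Sum>c\<in>UNIV. K (x k) c * a j (x(k := c))) * b j y)"
      by (simp add: sum_distrib_left sum_distrib_right sum.swap[of _ UNIV] mult.assoc)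
    finally show "apply_local k K v (merge A x y) =
        (\<Sum>j<r. (\<lambda>j x. \<Sum>c\<in>UNIV. K (x k) c * a j (x(k := c))) j x * b j y)" by simp
  qed
qed

lemma schmidt_rank_apply_local_le:
  assumes A: "A \<subseteq> {0..<n}" and k: "k < n"
  shows "schmidt_rank n A (apply_local k K v) \<le> schmidt_rank n A v"
proof (cases "k \<in> A")
  case True
  then show ?thesis
    by (intro schmidt_rank_le_by_product_decomp[OF A] product_decomp_apply_local)
next
  case False
  then have "k \<in> {0..<n} - A" using k by simp
  then have "schmidt_rank n ({0..<n} - A) (apply_local k K v) \<le> schmidt_rank n ({0..<n} - A) v"
    by (intro schmidt_rank_le_by_product_decomp product_decomp_apply_local) auto
  then show ?thesis using schmidt_rank_compl[OF A] by simp
qed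

lemma schmidt_rank_apply_prod_le:
  assumes A: "A \<subseteq> {0..<N}"
  shows "schmidt_rank N A (apply_prod N K v) \<le> schmidt_rank N A v"
proof (rule schmidt_rank_le_by_product_decomp[OF A])
  fix r assume "product_decomp N A v r"
  then obtain a b where ab: "\<And>x y. x \<in> cfg A \<Longrightarrow> y \<in> cfg ({0..<N} - A) \<Longrightarrow>
      v (merge A x y) = (\<Sum>k<r. a k x * b k y)"
    by (elim product_decompE) blast
  let ?B = "{0..<N} - A"
  define KA where "KA x x' = (\<Prod>i\<in>A. K i (x i) (x' i))" for x x'
  define KB where "KB y y' = (\<Prod>i\<in>?B. K i (y i) (y' i))" for y y'
  have K: "(\<Prod>i<N. K i (merge A x y i) (merge A x' y' i)) = KA x x' * KB y y'" for x y x' y'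
  proof -
    have split: "{..<N} = A \<union> ?B" using A by auto
    have "finite A" using A finite_subset by auto
    then have "(\<Prod>i<N. K i (merge A x y i) (merge A x' y' i)) =
        (\<Prod>i\<in>A. K i (merge A x y i) (merge A x' y' i)) * (\<Prod>i\<in>?B. K i (merge A x y i) (merge A x' y' i))"
      unfolding split by (intro prod.union_disjoint) auto
    also have "\<dots> = KA x x' * KB y y'"
      unfolding KA_def KB_def by (intro arg_cong2[where f = "(*)"] prod.cong) (auto simp: merge_def)
    finally show ?thesis .
  qed
  show "product_decomp N A (apply_prod N K v) r"
  proof (rule product_decompI)
    fix x y assume x: "x \<in> cfg A" and y: "y \<in> cfg ?B"
    have "apply_prod N K v (merge A x y) =
        (\<Sum>x'\<in>cfg A. \<Sum>y'\<in>cfg ?B. KA x x' * KB y y' * (\<Sum>k<r. a k x' * b k y'))"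
      unfolding apply_prod_def sum_cfg_merge[OF A] by (simp add: K ab)
    also have "\<dots> = (\<Sum>x'\<in>cfg A. \<Sum>y'\<in>cfg ?B. \<Sum>k<r. (KA x x' * a k x') * (KB y y' * b k y'))"
      by (simp add: sum_distrib_left mult_ac)
    also have "\<dots> = (\<Sum>x'\<in>cfg A. \<Sum>k<r. \<Sum>y'\<in>cfg ?B. (KA x x' * a k x') * (KB y y' * b k y'))"
      by (intro sum.cong refl) (rule sum.swap)
    also have "\<dots> = (\<Sum>k<r. \<Sum>x'\<in>cfg A. \<Sum>y'\<in>cfg ?B. (KA x x' * a k x') * (KB y y' * b k y'))"
      by (rule sum.swap)
    also have "\<dots> = (\<Sum>k<r. (\<Sum>x'\<in>cfg A. KA x x' * a k x') * (\<Sum>y'\<in>cfg ?B. KB y y' * b k y'))"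
      by (simp add: sum_product)
    finally show "apply_prod N K v (merge A x y) =
        (\<Sum>k<r. (\<lambda>k x. \<Sum>x'\<in>cfg A. KA x x' * a k x') k x * (\<lambda>k y. \<Sum>y'\<in>cfg ?B. KB y y' * b k y') k y)"
      by simp
  qed
qed

lemma schmidt_rank_embed_le:
  assumes sg: "inj_on sg {0..<n}" "sg ` {0..<n} \<subseteq> {0..<N}" and A: "A \<subseteq> {0..<N}"
  shows "schmidt_rank n {j\<in>{0..<n}. sg j \<in> A} psi' \<le> schmidt_rank N A (embed N n sg psi')"
proof -
  let ?r = "schmidt_rank N A (embed N n sg psi')"
  let ?A' = "{j\<in>{0..<n}. sg j \<in> A}"
  obtain a b where ab: "\<And>x y. x \<in> cfg A \<Longrightarrow> y \<in> cfg ({0..<N} - A) \<Longrightarrow>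
      embed N n sg psi' (merge A x y) = (\<Sum>k<?r. a k x * b k y)"
    using product_decomp_schmidt_rank[OF A, of "embed N n sg psi'"] by (elim product_decompE) blast
  define iv where "iv = the_inv_into {0..<n} sg"
  have iv: "iv (sg j) = j" if "j < n" for j
    unfolding iv_def using the_inv_into_f_f[OF sg(1)] that by simp
  define X where "X x' = restrict (\<lambda>i. if i \<in> sg ` ?A' then x' (iv i) else False) A" for x'
  define Y where "Y y' = restrict (\<lambda>i. if i \<in> sg ` ({0..<n} - ?A') then y' (iv i) else False) ({0..<N} - A)"
    for y'
  have "product_decomp n ?A' psi' ?r"
  proof (rule product_decompI)
    fix x' y' assume x': "x' \<in> cfg ?A'" and y': "y' \<in> cfg ({0..<n} - ?A')"
    have "restrict (\<lambda>j. merge A (X x') (Y y') (sg j)) {0..<n} = merge ?A' x' y'"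
    proof
      fix j
      show "restrict (\<lambda>j. merge A (X x') (Y y') (sg j)) {0..<n} j = merge ?A' x' y' j"
      proof (cases "j < n")
        case True
        then have "sg j < N" using sg(2) by (auto simp: image_subset_iff)
        moreover have "sg j \<in> sg ` ?A' \<longleftrightarrow> sg j \<in> A" "sg j \<in> sg ` ({0..<n} - ?A') \<longleftrightarrow> sg j \<notin> A"
          using True sg(1) by (auto simp: inj_on_def)
        ultimately show ?thesis using True iv[OF True] by (auto simp: merge_def X_def Y_def)
      qed (use y' in \<open>auto simp: merge_def mem_cfg_iff\<close>)
    qed
    moreover have "\<forall>i\<in>{0..<N} - sg ` {0..<n}. merge A (X x') (Y y') i = False"
      by (auto simp: merge_def X_def Y_def)
    ultimately have "psi' (merge ?A' x' y') = embed N n sg psi' (merge A (X x') (Y y'))"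
      by (simp add: embed_def)
    also have "\<dots> = (\<Sum>k<?r. a k (X x') * b k (Y y'))"
      by (rule ab) (auto simp: X_def Y_def cfg_def)
    finally show "psi' (merge ?A' x' y') = (\<Sum>k<?r. (\<lambda>k x'. a k (X x')) k x' * (\<lambda>k y'. b k (Y y')) k y')"
      by simp
  qed
  then show ?thesis by (rule schmidt_rank_le_of_product_decomp)
qed

section \<open>Subcubic trees\<close>

lemma in_adj_iff [simp]: "(x, y) \<in> adj E \<longleftrightarrow> {x, y} \<in> E"
  by (simp add: adj_def)

lemma sym_adj: "sym (adj E)"
  by (auto simp: sym_def insert_commute)

lemma rtrancl_adj_sym: "(x, y) \<in> (adj E)\<^sup>* \<Longrightarrow> (y, x) \<in> (adj E)\<^sup>*"
  using sym_rtrancl[OF sym_adj] by (auto dest: symD)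

lemma rtrancl_adj_map:
  assumes "\<And>s t. {s, t} \<in> F \<Longrightarrow> (h s, h t) \<in> (adj G)\<^sup>*" and "(x, y) \<in> (adj F)\<^sup>*"
  shows "(h x, h y) \<in> (adj G)\<^sup>*"
  using assms(2) by induction (auto intro: rtrancl_trans assms(1))

lemma rtrancl_adj_insert_edge:
  "(x, z) \<in> (adj (insert {c, d} E))\<^sup>* \<longleftrightarrow>
     (x, z) \<in> (adj E)\<^sup>* \<or> (x, c) \<in> (adj E)\<^sup>* \<and> (d, z) \<in> (adj E)\<^sup>* \<or>
     (x, d) \<in> (adj E)\<^sup>* \<and> (c, z) \<in> (adj E)\<^sup>*"
proof -
  have "adj (insert {c, d} E) = insert (c, d) (insert (d, c) (adj E))"
    by (auto simp: adj_def doubleton_eq_iff)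
  then show ?thesis
    by (auto simp: rtrancl_insert intro: rtrancl_trans)
qed

lemma adj_path2: "{a, b} \<in> E \<Longrightarrow> {b, c} \<in> E \<Longrightarrow> (a, c) \<in> (adj E)\<^sup>*"
  by (simp add: converse_rtrancl_into_rtrancl)

lemma finite_reach:
  assumes "finite E" and "\<forall>f\<in>E. finite f"
  shows "finite ((adj E)\<^sup>* `` {a})"
proof -
  have "(adj E)\<^sup>* `` {a} \<subseteq> insert a (\<Union>E)"
  proof
    fix z assume "z \<in> (adj E)\<^sup>* `` {a}"
    then have "(a, z) \<in> (adj E)\<^sup>*" by simp
    then show "z \<in> insert a (\<Union>E)" by induction auto
  qed
  then show ?thesis using assms finite_subset by blast
qed

lemma reach_insert_edge_same:
  assumes "c \<in> (adj E)\<^sup>* `` {a} \<longleftrightarrow> d \<in> (adj E)\<^sup>* `` {a}"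
  shows "(adj (insert {c, d} E))\<^sup>* `` {a} = (adj E)\<^sup>* `` {a}"
  using assms rtrancl_adj_insert_edge[of a _ c d E] by (auto intro: rtrancl_trans)

lemma reach_insert_edge_join:
  assumes "c \<in> (adj E)\<^sup>* `` {a}"
  shows "(adj (insert {c, d} E))\<^sup>* `` {a} = (adj E)\<^sup>* `` {a} \<union> (adj E)\<^sup>* `` {d}"
  using assms rtrancl_adj_insert_edge[of a _ c d E] by (auto intro: rtrancl_trans)

lemma card_reach_le:
  assumes "finite E" and "\<forall>f\<in>E. card f = 2"
  shows "card ((adj E)\<^sup>* `` {a}) \<le> card {f\<in>E. f \<subseteq> (adj E)\<^sup>* `` {a}} + 1"
  using assms
proof (induction E arbitrary: a rule: finite_induct)
  case empty
  then show ?case by (simp add: adj_def)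
next
  case (insert e E)
  let ?R = "\<lambda>b. (adj E)\<^sup>* `` {b}"
  let ?Ed = "\<lambda>X. {f\<in>E. f \<subseteq> X}"
  have IH: "card (?R b) \<le> card (?Ed (?R b)) + 1" for b
    using insert by simp
  have finite_edges: "finite (?Ed X)" "finite {f\<in>insert e E. f \<subseteq> X}" for X
    using insert(1) by simp_all
  obtain c d where e: "e = {c, d}" using insert(4) by (auto simp: card_2_iff)
  show ?case
  proof (cases "c \<in> ?R a \<longleftrightarrow> d \<in> ?R a")
    case True
    have "card (?Ed (?R a)) \<le> card {f\<in>insert e E. f \<subseteq> ?R a}"
      by (intro card_mono finite_edges) auto
    then show ?thesis using IH[of a] reach_insert_edge_same[OF True] by (simp add: e)
  next
    case False
    then obtain x y where xy: "e = {x, y}" "x \<in> ?R a" "y \<notin> ?R a"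
      using e by (cases "c \<in> ?R a") (auto simp: insert_commute)
    have disjoint: "?R a \<inter> ?R y = {}"
      using xy(3) by (auto dest: rtrancl_adj_sym intro: rtrancl_trans)
    have finite_R: "finite (?R b)" for b
      using insert by (intro finite_reach) (auto intro: card_ge_0_finite)
    have "card (?R a \<union> ?R y) = card (?R a) + card (?R y)"
      by (rule card_Un_disjoint[OF finite_R finite_R disjoint])
    also have "\<dots> \<le> card (insert e (?Ed (?R a) \<union> ?Ed (?R y))) + 1"
    proof -
      have "?Ed (?R a) \<inter> ?Ed (?R y) = {}"
        using disjoint insert(4) by (fastforce simp: card_2_iff)
      moreover have "e \<notin> ?Ed (?R a) \<union> ?Ed (?R y)" using insert(2) by simp
      ultimately show ?thesis using IH[of a] IH[of y] finite_edges(1) by (simp add: card_Un_disjoint)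
    qed
    also have "\<dots> \<le> card {f\<in>insert e E. f \<subseteq> ?R a \<union> ?R y} + 1"
      using xy by (intro add_right_mono card_mono finite_edges) auto
    finally show ?thesis using reach_insert_edge_join[OF xy(2)] by (simp add: xy(1))
  qed
qed

lemma connected_card_le:
  assumes "finite V" and "\<forall>f\<in>E. f \<subseteq> V \<and> card f = 2" and "a \<in> V"
    and "\<forall>z\<in>V. (a, z) \<in> (adj E)\<^sup>*"
  shows "card V \<le> card E + 1"
proof -
  have reach: "(adj E)\<^sup>* `` {a} = V"
  proof
    show "(adj E)\<^sup>* `` {a} \<subseteq> V"
    proof
      fix z assume "z \<in> (adj E)\<^sup>* `` {a}"
      then have "(a, z) \<in> (adj E)\<^sup>*" by simp
      then show "z \<in> V" using assms(2,3) by induction auto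
    qed
  qed (use assms(4) in auto)
  have "finite E" using assms(1,2) finite_subset[of E "Pow V"] by auto
  moreover have "{f\<in>E. f \<subseteq> V} = E" using assms(2) by auto
  ultimately show ?thesis using card_reach_le[of E a] assms(2) reach by simp
qed

lemma is_treeD:
  assumes "is_tree V E"
  shows "finite V" and "finite E" and "f \<in> E \<Longrightarrow> f \<subseteq> V" and "f \<in> E \<Longrightarrow> card f = 2"
    and "u \<in> V \<Longrightarrow> v \<in> V \<Longrightarrow> (u, v) \<in> (adj E)\<^sup>*" and "card E + 1 = card V"
  using assms finite_subset[of E "Pow V"] by (auto simp: is_tree_def)

lemma tree_delete_edge:
  assumes T: "is_tree V E" and e: "{a, b} \<in> E"
  shows "(a, b) \<notin> (adj (E - {{a, b}}))\<^sup>*"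
    and "z \<in> V \<Longrightarrow> (a, z) \<in> (adj (E - {{a, b}}))\<^sup>* \<or> (b, z) \<in> (adj (E - {{a, b}}))\<^sup>*"
proof -
  let ?R = "adj (E - {{a, b}})"
  have aV: "a \<in> V" using is_treeD(3)[OF T e] by simp
  have split: "(a, z) \<in> ?R\<^sup>* \<or> (b, z) \<in> ?R\<^sup>*" if "z \<in> V" for z
  proof -
    have "insert {a, b} (E - {{a, b}}) = E" using e by blast
    then have "(a, z) \<in> (adj (insert {a, b} (E - {{a, b}})))\<^sup>*"
      using is_treeD(5)[OF T aV that] by simp
    then show ?thesis unfolding rtrancl_adj_insert_edge by blast
  qed
  then show "z \<in> V \<Longrightarrow> (a, z) \<in> ?R\<^sup>* \<or> (b, z) \<in> ?R\<^sup>*" .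
  show "(a, b) \<notin> ?R\<^sup>*"
  proof
    assume "(a, b) \<in> ?R\<^sup>*"
    then have conn: "\<forall>z\<in>V. (a, z) \<in> ?R\<^sup>*" using split by (blast intro: rtrancl_trans)
    have "card V \<le> card (E - {{a, b}}) + 1"
      by (rule connected_card_le[OF is_treeD(1)[OF T] _ aV conn]) (auto dest: is_treeD(3,4)[OF T])
    also have "\<dots> = card E" using card_Suc_Diff1[OF is_treeD(2)[OF T] e] by simp
    finally show False using is_treeD(6)[OF T] by simp
  qed
qed

lemma tree_delete_edge_sides:
  assumes T: "is_tree V E" and e: "{a, b} \<in> E" and z: "z \<in> V"
  shows "(b, z) \<in> (adj (E - {{a, b}}))\<^sup>* \<longleftrightarrow> (a, z) \<notin> (adj (E - {{a, b}}))\<^sup>*"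
proof
  assume bz: "(b, z) \<in> (adj (E - {{a, b}}))\<^sup>*"
  show "(a, z) \<notin> (adj (E - {{a, b}}))\<^sup>*"
  proof
    assume "(a, z) \<in> (adj (E - {{a, b}}))\<^sup>*"
    then have "(a, b) \<in> (adj (E - {{a, b}}))\<^sup>*" using rtrancl_adj_sym[OF bz] by (rule rtrancl_trans)
    then show False using tree_delete_edge(1)[OF T e] by contradiction
  qed
qed (use tree_delete_edge(2)[OF T e z] in blast)

lemma tree_delete_edge_component:
  assumes T: "is_tree V E" and e: "e \<in> E" and x: "x \<in> V"
  defines "C \<equiv> \<lambda>y. {z\<in>V. (y, z) \<in> (adj (E - {e}))\<^sup>*}"
  shows "C x = C (Min e) \<or> C x = V - C (Min e)"
proof -
  obtain b where e_eq: "e = {Min e, b}"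
  proof -
    obtain a b where "e = {a, b}" "a \<noteq> b" using is_treeD(4)[OF T e] by (auto simp: card_2_iff)
    then show ?thesis using that[of b] that[of a] by (cases "a \<le> b") (auto simp: insert_commute min_def)
  qed
  have eE: "{Min e, b} \<in> E" using e e_eq by simp
  have same: "C y = C y'" if "(y, y') \<in> (adj (E - {e}))\<^sup>*" for y y'
    unfolding C_def using rtrancl_trans[OF rtrancl_adj_sym[OF that]] rtrancl_trans[OF that] by blast
  consider "(Min e, x) \<in> (adj (E - {e}))\<^sup>*" | "(b, x) \<in> (adj (E - {e}))\<^sup>*"
    using tree_delete_edge(2)[OF T eE x] e_eq by auto
  then show ?thesis
  proof cases
    case 1
    then show ?thesis using same by blast
  next
    case 2
    then have "C x = C b" using same by blast
    also have "\<dots> = V - C (Min e)"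
      unfolding C_def using tree_delete_edge_sides[OF T eE] e_eq by auto
    finally show ?thesis ..
  qed
qed

text \<open>Labelling the leaves by an arbitrary set \<open>Q\<close> instead of \<open>{0..<n}\<close> lets leaves be removed
  one at a time.\<close>

definition subcubic_tree_on :: "nat set \<Rightarrow> ltree \<Rightarrow> bool" where
  "subcubic_tree_on Q T = (case T of (Vt, E, lf) \<Rightarrow>
     is_tree Vt E \<and> (\<forall>v\<in>Vt. degree E v \<in> {1, 3}) \<and> bij_betw lf Q {v \<in> Vt. degree E v = 1})"

definition cut_side_on :: "nat set \<Rightarrow> ltree \<Rightarrow> nat set \<Rightarrow> nat set" where
  "cut_side_on Q T e = (case T of (Vt, E, lf) \<Rightarrow> {i \<in> Q. (Min e, lf i) \<in> (adj (E - {e}))\<^sup>*})"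

lemma subcubic_tree_eq: "subcubic_tree n = subcubic_tree_on {0..<n}"
  by (simp add: fun_eq_iff subcubic_tree_def subcubic_tree_on_def)

lemma cut_side_eq: "cut_side n = cut_side_on {0..<n}"
  by (simp add: fun_eq_iff cut_side_def cut_side_on_def)

definition cuts_inherited :: "nat set \<Rightarrow> ltree \<Rightarrow> nat set \<Rightarrow> ltree \<Rightarrow> bool" where
  "cuts_inherited S T' Q T \<longleftrightarrow> (\<forall>e'\<in>tree_edges T'. \<exists>e\<in>tree_edges T.
     cut_side_on S T' e' = cut_side_on Q T e \<inter> S \<or> cut_side_on S T' e' = S - cut_side_on Q T e)"

lemma cuts_inherited_refl: "cuts_inherited Q T Q T"
  unfolding cuts_inherited_def by (cases T) (auto simp: cut_side_on_def)

lemma cuts_inherited_trans: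
  assumes "cuts_inherited S T'' Q' T'" and "cuts_inherited Q' T' Q T" and "S \<subseteq> Q'"
  shows "cuts_inherited S T'' Q T"
  unfolding cuts_inherited_def
proof
  fix e'' assume "e'' \<in> tree_edges T''"
  then obtain e' where "e' \<in> tree_edges T'" and e':
      "cut_side_on S T'' e'' = cut_side_on Q' T' e' \<inter> S \<or> cut_side_on S T'' e'' = S - cut_side_on Q' T' e'"
    using assms(1) by (auto simp: cuts_inherited_def)
  then obtain e where "e \<in> tree_edges T" and
      "cut_side_on Q' T' e' = cut_side_on Q T e \<inter> Q' \<or> cut_side_on Q' T' e' = Q' - cut_side_on Q T e"
    using assms(2) by (auto simp: cuts_inherited_def)
  with e' assms(3) show "\<exists>e\<in>tree_edges T.
      cut_side_on S T'' e'' = cut_side_on Q T e \<inter> S \<or> cut_side_on S T'' e'' = S - cut_side_on Q T e"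
    by blast
qed

lemma subcubic_tree_leaf_in:
  assumes "subcubic_tree_on Q (V, E, lf)" and "i \<in> Q"
  shows "lf i \<in> V" and "degree E (lf i) = 1"
  using assms bij_betw_apply[of lf Q "{v \<in> V. degree E v = 1}" i] by (auto simp: subcubic_tree_on_def)

lemma cuts_inherited_of_reach_eq:
  assumes T: "is_tree V E" and T': "subcubic_tree_on S (V', E', lf)" and "V' \<subseteq> V" and "S \<subseteq> Q"
    and reach: "\<And>e'. e' \<in> E' \<Longrightarrow> \<exists>e\<in>E. \<forall>x\<in>V'. \<forall>z\<in>V'.
        (x, z) \<in> (adj (E' - {e'}))\<^sup>* \<longleftrightarrow> (x, z) \<in> (adj (E - {e}))\<^sup>*"
  shows "cuts_inherited S (V', E', lf) Q (V, E, lf)"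
  unfolding cuts_inherited_def tree_edges_def
proof (clarsimp)
  fix e' assume e': "e' \<in> E'"
  obtain e where e: "e \<in> E"
    and eq: "\<And>x z. x \<in> V' \<Longrightarrow> z \<in> V' \<Longrightarrow>
      (x, z) \<in> (adj (E' - {e'}))\<^sup>* \<longleftrightarrow> (x, z) \<in> (adj (E - {e}))\<^sup>*"
    using reach[OF e'] by blast
  define C where "C y = {z\<in>V. (y, z) \<in> (adj (E - {e}))\<^sup>*}" for y
  have T'_tree: "is_tree V' E'" using T' by (simp add: subcubic_tree_on_def)
  have "Min e' \<in> e'"
    using is_treeD(4)[OF T'_tree e'] by (intro Min_in) (auto simp: card_2_iff)
  then have min': "Min e' \<in> V'" using is_treeD(3)[OF T'_tree e'] by blast
  have leaf: "lf i \<in> V'" if "i \<in> S" for i using subcubic_tree_leaf_in(1)[OF T' that] .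
  have cut': "cut_side_on S (V', E', lf) e' = {i\<in>S. lf i \<in> C (Min e')}"
    using eq[OF min' leaf] leaf \<open>V' \<subseteq> V\<close> by (auto simp: cut_side_on_def C_def)
  have cut: "cut_side_on Q (V, E, lf) e \<inter> S = {i\<in>S. lf i \<in> C (Min e)}"
    "S - cut_side_on Q (V, E, lf) e = {i\<in>S. lf i \<in> V - C (Min e)}"
    using leaf \<open>V' \<subseteq> V\<close> \<open>S \<subseteq> Q\<close> by (auto simp: cut_side_on_def C_def)
  have "C (Min e') = C (Min e) \<or> C (Min e') = V - C (Min e)"
    unfolding C_def using tree_delete_edge_component[OF T e] min' \<open>V' \<subseteq> V\<close> by blast
  then have "cut_side_on S (V', E', lf) e' = cut_side_on Q (V, E, lf) e \<inter> S \<or>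
      cut_side_on S (V', E', lf) e' = S - cut_side_on Q (V, E, lf) e"
    unfolding cut' cut by (elim disjE) simp_all
  with e show "\<exists>e\<in>E. cut_side_on S (V', E', lf) e' = cut_side_on Q (V, E, lf) e \<inter> S \<or>
      cut_side_on S (V', E', lf) e' = S - cut_side_on Q (V, E, lf) e" ..
qed

lemma card_insert_Diff_swap:
  "finite A \<Longrightarrow> x \<in> A \<Longrightarrow> y \<notin> A \<Longrightarrow> card (insert y (A - {x})) = card A"
  by (metis card_Suc_Diff1 card_insert_disjoint finite_Diff insert_Diff insert_iff)

text \<open>Removing the leaf \<open>l\<close> from a subcubic tree leaves its neighbour \<open>p\<close> with degree 2; the
  contraction deletes \<open>p\<close> as well and joins its other neighbours \<open>u\<close> and \<open>w\<close> directly.\<close>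

locale leaf_contraction =
  fixes V :: "nat set" and E :: "nat set set" and l p u w :: nat
  assumes tree: "is_tree V E"
    and edges_at_l: "{f\<in>E. l \<in> f} = {{l, p}}"
    and edges_at_p: "{f\<in>E. p \<in> f} = {{l, p}, {p, u}, {p, w}}"
    and distinct: "distinct [l, p, u, w]"
begin

definition V' :: "nat set" where "V' = V - {l, p}"

definition E' :: "nat set set" where "E' = insert {u, w} (E - {{l, p}, {p, u}, {p, w}})"

lemma edge_avoids_l_p: "f \<in> E \<Longrightarrow> f \<notin> {{l, p}, {p, u}, {p, w}} \<Longrightarrow> l \<notin> f \<and> p \<notin> f"
  using edges_at_l edges_at_p by blast

lemma edges_at_p_in_E: "{l, p} \<in> E" "{p, u} \<in> E" "{p, w} \<in> E"
  using edges_at_p by auto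

lemma in_V: "l \<in> V" "p \<in> V" "u \<in> V" "w \<in> V"
  using edges_at_p_in_E is_treeD(3)[OF tree] by auto

lemma uw_notin_E: "{u, w} \<notin> E"
proof
  assume uw: "{u, w} \<in> E"
  let ?R = "adj (E - {{p, u}})"
  have "{p, w} \<in> E - {{p, u}}" "{w, u} \<in> E - {{p, u}}"
    using edges_at_p_in_E uw distinct by (auto simp: doubleton_eq_iff insert_commute)
  then have "(p, u) \<in> ?R\<^sup>*" by (rule adj_path2)
  then show False using tree_delete_edge(1)[OF tree edges_at_p_in_E(2)] by contradiction
qed

lemma u_w_in_V': "u \<in> V'" "w \<in> V'"
  using in_V distinct by (auto simp: V'_def)

lemma E'_edges: "f \<in> E' \<Longrightarrow> f \<subseteq> V' \<and> card f = 2"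
proof (cases "f = {u, w}")
  case False
  moreover assume "f \<in> E'"
  ultimately have "f \<in> E" "f \<notin> {{l, p}, {p, u}, {p, w}}" by (auto simp: E'_def)
  then show ?thesis using edge_avoids_l_p is_treeD(3,4)[OF tree] by (auto simp: V'_def)
qed (use u_w_in_V' distinct in auto)

lemma reach_E_imp_E':
  assumes X: "X \<subseteq> E - {{l, p}, {p, u}, {p, w}}" and "(x, z) \<in> (adj (E - X))\<^sup>*"
    and "x \<in> V'" and "z \<in> V'"
  shows "(x, z) \<in> (adj (E' - X))\<^sup>*"
proof -
  define h where "h y = (if y \<in> {l, p} then u else y)" for y
  have "(h x, h z) \<in> (adj (E' - X))\<^sup>*"
  proof (rule rtrancl_adj_map[OF _ assms(2)])
    fix s t assume st: "{s, t} \<in> E - X"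
    consider "{s, t} \<in> {{l, p}, {p, u}}" | "{s, t} = {p, w}" | "{s, t} \<notin> {{l, p}, {p, u}, {p, w}}"
      by blast
    then show "(h s, h t) \<in> (adj (E' - X))\<^sup>*"
    proof cases
      case 1
      then show ?thesis by (auto simp: h_def doubleton_eq_iff)
    next
      case 2
      have "{u, w} \<in> E' - X" "{w, u} \<in> E' - X"
        using X uw_notin_E by (auto simp: E'_def insert_commute)
      then show ?thesis using 2 distinct by (auto simp: h_def doubleton_eq_iff)
    next
      case 3
      then have "h s = s" "h t = t" "{s, t} \<in> E' - X"
        using st edge_avoids_l_p[of "{s, t}"] by (auto simp: h_def E'_def)
      then show ?thesis by (simp add: r_into_rtrancl)
    qed
  qed
  then show ?thesis using assms(3,4) by (simp add: h_def V'_def)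
qed

lemma reach_E'_imp_E:
  assumes X: "X \<subseteq> E - {{l, p}, {p, u}, {p, w}}" and "(x, z) \<in> (adj (E' - X))\<^sup>*"
  shows "(x, z) \<in> (adj (E - X))\<^sup>*"
proof -
  have "(id x, id z) \<in> (adj (E - X))\<^sup>*"
  proof (rule rtrancl_adj_map[OF _ assms(2)])
    fix s t assume st: "{s, t} \<in> E' - X"
    show "(id s, id t) \<in> (adj (E - X))\<^sup>*"
    proof (cases "{s, t} = {u, w}")
      case True
      have "{s, p} \<in> E - X" "{p, t} \<in> E - X"
        using True X edges_at_p_in_E by (auto simp: doubleton_eq_iff insert_commute)
      then show ?thesis using adj_path2 by simp
    next
      case False
      then have "{s, t} \<in> E - X" using st by (simp add: E'_def)
      then show ?thesis by (simp add: r_into_rtrancl)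
    qed
  qed
  then show ?thesis by simp
qed

lemma reach_E'_uw_iff:
  assumes "x \<in> V'" and "z \<in> V'"
  shows "(x, z) \<in> (adj (E' - {{u, w}}))\<^sup>* \<longleftrightarrow> (x, z) \<in> (adj (E - {{p, u}}))\<^sup>*"
proof
  assume "(x, z) \<in> (adj (E' - {{u, w}}))\<^sup>*"
  moreover have "adj (E' - {{u, w}}) \<subseteq> adj (E - {{p, u}})"
    using uw_notin_E by (auto simp: E'_def adj_def)
  ultimately show "(x, z) \<in> (adj (E - {{p, u}}))\<^sup>*" using rtrancl_mono by blast
next
  assume xz: "(x, z) \<in> (adj (E - {{p, u}}))\<^sup>*"
  define h where "h y = (if y \<in> {l, p} then w else y)" for y
  have "(h x, h z) \<in> (adj (E' - {{u, w}}))\<^sup>*"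
  proof (rule rtrancl_adj_map[OF _ xz])
    fix s t assume st: "{s, t} \<in> E - {{p, u}}"
    show "(h s, h t) \<in> (adj (E' - {{u, w}}))\<^sup>*"
    proof (cases "{s, t} \<in> {{l, p}, {p, w}}")
      case True
      then show ?thesis by (auto simp: h_def doubleton_eq_iff)
    next
      case False
      then have "{s, t} \<notin> {{l, p}, {p, u}, {p, w}}" using st by blast
      then have "h s = s" "h t = t" "{s, t} \<in> E' - {{u, w}}"
        using st edge_avoids_l_p[of "{s, t}"] uw_notin_E by (auto simp: h_def E'_def)
      then show ?thesis by (simp add: r_into_rtrancl)
    qed
  qed
  then show "(x, z) \<in> (adj (E' - {{u, w}}))\<^sup>*" using assms by (simp add: h_def V'_def)
qed

lemma three_edges_at_p: "card {{l, p}, {p, u}, {p, w}} = 3"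
  using distinct by (simp add: doubleton_eq_iff)

lemma tree': "is_tree V' E'"
  unfolding is_tree_def
proof (intro conjI ballI)
  show "finite V'" using is_treeD(1)[OF tree] by (simp add: V'_def)
  show "V' \<noteq> {}" using u_w_in_V' by blast
  show "f \<subseteq> V'" "card f = 2" if "f \<in> E'" for f using E'_edges[OF that] by simp_all
  show "(x, z) \<in> (adj E')\<^sup>*" if "x \<in> V'" "z \<in> V'" for x z
    using reach_E_imp_E'[of "{}"] is_treeD(5)[OF tree] that by (simp add: V'_def)
  have "{{l, p}, {p, u}, {p, w}} \<subseteq> E" using edges_at_p by blast
  then have "card (E - {{l, p}, {p, u}, {p, w}}) + 3 = card E"
    using three_edges_at_p card_Diff_subset[OF _ \<open>_ \<subseteq> E\<close>] card_mono[OF is_treeD(2)[OF tree] \<open>_ \<subseteq> E\<close>]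
    by simp
  moreover have "card V' + 2 = card V"
    using in_V distinct card_Diff_subset[of "{l, p}" V] card_mono[OF is_treeD(1)[OF tree], of "{l, p}"]
    by (simp add: V'_def)
  moreover have "card E' = card (E - {{l, p}, {p, u}, {p, w}}) + 1"
    using uw_notin_E is_treeD(2)[OF tree] by (simp add: E'_def)
  ultimately show "card E' + 1 = card V'" using is_treeD(6)[OF tree] by simp
qed

lemma degree_E':
  assumes "z \<in> V'"
  shows "degree E' z = degree E z"
proof -
  have finite: "finite {f\<in>E. z \<in> f}" using is_treeD(2)[OF tree] by simp
  have z: "z \<noteq> l" "z \<noteq> p" using assms by (auto simp: V'_def)
  consider "z = u" | "z = w" | "z \<noteq> u" "z \<noteq> w" by blast
  then show ?thesis
  proof cases
    case 1
    then have "{f\<in>E'. z \<in> f} = insert {u, w} ({f\<in>E. z \<in> f} - {{p, u}})"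
      using z distinct by (auto simp: E'_def)
    then show ?thesis
      using card_insert_Diff_swap[OF finite] edges_at_p_in_E uw_notin_E 1 by (simp add: degree_def)
  next
    case 2
    then have "{f\<in>E'. z \<in> f} = insert {u, w} ({f\<in>E. z \<in> f} - {{p, w}})"
      using z distinct by (auto simp: E'_def)
    then show ?thesis
      using card_insert_Diff_swap[OF finite] edges_at_p_in_E uw_notin_E 2 by (simp add: degree_def)
  next
    case 3
    then have "{f\<in>E'. z \<in> f} = {f\<in>E. z \<in> f}"
      using z by (auto simp: E'_def)
    then show ?thesis by (simp add: degree_def)
  qed
qed

lemma leaves_E': "{z\<in>V'. degree E' z = 1} = {z\<in>V. degree E z = 1} - {l}"
proof -
  have "degree E p = 3" using edges_at_p three_edges_at_p by (simp add: degree_def)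
  then have "z \<noteq> p" if "degree E z = 1" for z using that by auto
  then show ?thesis using degree_E' by (auto simp: V'_def)
qed

lemma reach_E'_eq:
  assumes "e' \<in> E'"
  shows "\<exists>e\<in>E. \<forall>x\<in>V'. \<forall>z\<in>V'. (x, z) \<in> (adj (E' - {e'}))\<^sup>* \<longleftrightarrow> (x, z) \<in> (adj (E - {e}))\<^sup>*"
proof (cases "e' = {u, w}")
  case True
  then show ?thesis using reach_E'_uw_iff edges_at_p_in_E(2) by blast
next
  case False
  then have X: "{e'} \<subseteq> E - {{l, p}, {p, u}, {p, w}}" using assms by (auto simp: E'_def)
  show ?thesis
  proof (intro bexI[of _ e'] ballI iffI)
    fix x z assume "x \<in> V'" "z \<in> V'"
    show "(x, z) \<in> (adj (E - {e'}))\<^sup>*" if "(x, z) \<in> (adj (E' - {e'}))\<^sup>*"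
      using reach_E'_imp_E[OF X that] .
    show "(x, z) \<in> (adj (E' - {e'}))\<^sup>*" if "(x, z) \<in> (adj (E - {e'}))\<^sup>*"
      using reach_E_imp_E'[OF X that \<open>x \<in> V'\<close> \<open>z \<in> V'\<close>] .
  qed (use X in blast)
qed

end

lemma card_2_obtain_other:
  assumes "card f = 2" and "x \<in> f"
  obtains y where "f = {x, y}" and "y \<noteq> x"
  using assms by (auto simp: card_2_iff doubleton_eq_iff)

lemma leaf_edge:
  assumes T: "is_tree V E" and "degree E l = 1"
  obtains p where "{f\<in>E. l \<in> f} = {{l, p}}"
proof -
  obtain f where f: "{f\<in>E. l \<in> f} = {f}"
    using assms(2) unfolding degree_def by (rule card_1_singletonE)
  then have "f \<in> E" "l \<in> f" by auto
  then obtain p where "f = {l, p}"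
    using card_2_obtain_other[OF is_treeD(4)[OF T]] by blast
  then show ?thesis using that f by simp
qed

lemma tree_isolated_edge:
  assumes T: "is_tree V E" and "{f\<in>E. l \<in> f} = {{l, p}}" and "{f\<in>E. p \<in> f} = {{l, p}}"
  shows "V \<subseteq> {l, p}"
proof
  fix z assume "z \<in> V"
  have "l \<in> V" using assms(2) is_treeD(3)[OF T] by blast
  then have "(l, z) \<in> (adj E)\<^sup>*" using is_treeD(5)[OF T] \<open>z \<in> V\<close> by blast
  then show "z \<in> {l, p}"
  proof induction
    case (step y z)
    then have "{y, z} \<in> {f\<in>E. l \<in> f} \<union> {f\<in>E. p \<in> f}" by auto
    then show ?case using assms(2,3) by (auto simp: doubleton_eq_iff)
  qed simp
qed

lemma edges_at_degree_3:
  assumes T: "is_tree V E" and "{l, p} \<in> E" and "degree E p = 3"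
  obtains u w where "{f\<in>E. p \<in> f} = {{l, p}, {p, u}, {p, w}}" and "distinct [l, p, u, w]"
proof -
  let ?P = "{f\<in>E. p \<in> f}"
  have "finite ?P" using is_treeD(2)[OF T] by simp
  moreover have "{l, p} \<in> ?P" using assms(2) by simp
  ultimately have "card (?P - {{l, p}}) = 2" using assms(3) by (simp add: degree_def)
  then obtain f g where fg: "?P - {{l, p}} = {f, g}" "f \<noteq> g" by (auto simp: card_2_iff)
  then have "f \<in> E" "p \<in> f" "g \<in> E" "p \<in> g" "f \<noteq> {l, p}" "g \<noteq> {l, p}" by auto
  obtain u where "f = {p, u}" "u \<noteq> p"
    using card_2_obtain_other[OF is_treeD(4)[OF T \<open>f \<in> E\<close>] \<open>p \<in> f\<close>] .
  moreover obtain w where "g = {p, w}" "w \<noteq> p"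
    using card_2_obtain_other[OF is_treeD(4)[OF T \<open>g \<in> E\<close>] \<open>p \<in> g\<close>] .
  moreover have "l \<noteq> p" using is_treeD(4)[OF T assms(2)] by auto
  moreover have "?P = {{l, p}, f, g}" using fg \<open>{l, p} \<in> ?P\<close> by blast
  ultimately show ?thesis
    using that[of u w] fg \<open>f \<noteq> {l, p}\<close> \<open>g \<noteq> {l, p}\<close> by (auto simp: doubleton_eq_iff)
qed

lemma leaf_neighbour_degree:
  assumes T: "subcubic_tree_on Q (V, E, lf)" and Q: "3 \<le> card Q"
    and at_l: "{f\<in>E. l \<in> f} = {{l, p}}"
  shows "degree E p = 3"
proof -
  have tree: "is_tree V E" and leaves: "bij_betw lf Q {v\<in>V. degree E v = 1}"
    using T by (simp_all add: subcubic_tree_on_def)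
  have lp: "{l, p} \<in> E" using at_l by blast
  have "degree E p \<noteq> 1"
  proof
    assume "degree E p = 1"
    then obtain g where "{f\<in>E. p \<in> f} = {g}"
      unfolding degree_def by (rule card_1_singletonE)
    moreover have "{l, p} \<in> {f\<in>E. p \<in> f}" using lp by simp
    ultimately have "{f\<in>E. p \<in> f} = {{l, p}}" by simp
    then have "{v\<in>V. degree E v = 1} \<subseteq> {l, p}"
      using tree_isolated_edge[OF tree at_l] by blast
    then have "card {v\<in>V. degree E v = 1} \<le> card {l, p}" by (intro card_mono) simp_all
    also have "\<dots> \<le> 2" by (simp add: card_insert_if)
    finally show False using Q bij_betw_same_card[OF leaves] by simp
  qed
  moreover have "p \<in> V" using lp is_treeD(3)[OF tree] by blast
  ultimately show ?thesis using T by (auto simp: subcubic_tree_on_def)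
qed

lemma subcubic_tree_remove_leaf:
  assumes T: "subcubic_tree_on Q (V, E, lf)" and q: "q \<in> Q" and Q: "3 \<le> card Q"
  obtains V' E' where "subcubic_tree_on (Q - {q}) (V', E', lf)"
    and "cuts_inherited (Q - {q}) (V', E', lf) Q (V, E, lf)"
proof -
  have tree: "is_tree V E" and degrees: "\<forall>v\<in>V. degree E v \<in> {1, 3}"
    and leaves: "bij_betw lf Q {v\<in>V. degree E v = 1}"
    using T by (simp_all add: subcubic_tree_on_def)
  obtain p where at_l: "{f\<in>E. lf q \<in> f} = {{lf q, p}}"
    using leaf_edge[OF tree subcubic_tree_leaf_in(2)[OF T q]] .
  then have lp: "{lf q, p} \<in> E" by blast
  have "degree E p = 3" using leaf_neighbour_degree[OF T Q at_l] .
  then obtain u w where at_p: "{f\<in>E. p \<in> f} = {{lf q, p}, {p, u}, {p, w}}"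
    and distinct: "distinct [lf q, p, u, w]"
    using edges_at_degree_3[OF tree lp] by blast
  interpret leaf_contraction V E "lf q" p u w
    using tree at_l at_p distinct by unfold_locales
  show ?thesis
  proof (rule that)
    have "bij_betw lf (Q - {q}) ({v\<in>V. degree E v = 1} - {lf q})"
      using bij_betw_DiffI[OF leaves, of "{q}" "{lf q}"] q bij_betw_apply[OF leaves q] by simp
    then show T': "subcubic_tree_on (Q - {q}) (V', E', lf)"
      using tree' degree_E' degrees leaves_E' by (auto simp: subcubic_tree_on_def V'_def)
    show "cuts_inherited (Q - {q}) (V', E', lf) Q (V, E, lf)"
      using reach_E'_eq by (intro cuts_inherited_of_reach_eq[OF tree T']) (auto simp: V'_def)
  qed
qed

lemma subcubic_tree_restrict:
  assumes "subcubic_tree_on Q (V, E, lf)" and "S \<subseteq> Q" and "2 \<le> card S"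
  obtains V' E' where "subcubic_tree_on S (V', E', lf)" and "cuts_inherited S (V', E', lf) Q (V, E, lf)"
proof -
  have "finite Q"
    using assms(1) bij_betw_finite[of lf Q] is_treeD(1)
    by (auto simp: subcubic_tree_on_def)
  then have "\<exists>V' E'. subcubic_tree_on S (V', E', lf) \<and> cuts_inherited S (V', E', lf) Q (V, E, lf)"
    using assms
  proof (induction "card (Q - S)" arbitrary: Q V E)
    case 0
    then have "Q = S" by auto
    then show ?case using 0 cuts_inherited_refl by blast
  next
    case (Suc k)
    then have "Q - S \<noteq> {}" by force
    then obtain q where q: "q \<in> Q - S" by blast
    have "card S < card Q"
      using q Suc.prems(1,3) by (intro psubset_card_mono) auto
    then have "3 \<le> card Q" using Suc.prems(4) by simp
    then obtain V1 E1 where T1: "subcubic_tree_on (Q - {q}) (V1, E1, lf)"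
      and cuts1: "cuts_inherited (Q - {q}) (V1, E1, lf) Q (V, E, lf)"
      using subcubic_tree_remove_leaf[OF Suc.prems(2)] q by blast
    have k: "k = card (Q - {q} - S)"
      using Suc.hyps(2) q Suc.prems(1) by (simp add: Diff_insert2[symmetric] card_Diff_singleton insert_commute)
    have S: "S \<subseteq> Q - {q}" using Suc.prems(3) q by blast
    moreover have "finite (Q - {q})" using Suc.prems(1) by simp
    ultimately obtain V' E' where "subcubic_tree_on S (V', E', lf)"
      "cuts_inherited S (V', E', lf) (Q - {q}) (V1, E1, lf)"
      using Suc.hyps(1)[OF k _ T1 _ Suc.prems(4)] by blast
    then show ?case using cuts_inherited_trans[OF _ cuts1 S] by blast
  qed
  then show ?thesis using that by blast
qed

lemma is_tree_add_pendant:
  assumes T: "is_tree V E" and a: "a \<in> V" and m: "m \<notin> V"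
  shows "is_tree (insert m V) (insert {a, m} E)"
proof -
  have new: "{a, m} \<notin> E" using m is_treeD(3)[OF T] by blast
  have "a \<noteq> m" using a m by blast
  have reach: "(a, z) \<in> (adj (insert {a, m} E))\<^sup>*" if "z \<in> insert m V" for z
  proof (cases "z = m")
    case False
    then have "(a, z) \<in> (adj E)\<^sup>*" using is_treeD(5)[OF T a] that by simp
    then show ?thesis using rtrancl_adj_insert_edge by blast
  qed (simp add: r_into_rtrancl)
  show ?thesis
    unfolding is_tree_def
  proof (intro conjI ballI)
    show "(x, z) \<in> (adj (insert {a, m} E))\<^sup>*" if "x \<in> insert m V" "z \<in> insert m V" for x z
      using rtrancl_trans[OF rtrancl_adj_sym[OF reach[OF that(1)]] reach[OF that(2)]] .
    show "card (insert {a, m} E) + 1 = card (insert m V)"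
      using new m is_treeD(1,2,6)[OF T] by simp
  qed (use T a \<open>a \<noteq> m\<close> is_treeD(3,4)[OF T] in \<open>auto simp: is_tree_def\<close>)
qed

lemma degree_insert_edge:
  assumes "finite E" and "f \<notin> E"
  shows "degree (insert f E) z = (if z \<in> f then Suc (degree E z) else degree E z)"
proof -
  have "{g\<in>insert f E. z \<in> g} = (if z \<in> f then insert f {g\<in>E. z \<in> g} else {g\<in>E. z \<in> g})"
    by auto
  then show ?thesis using assms by (simp add: degree_def)
qed

lemma degree_outside:
  assumes "is_tree V E" and "z \<notin> V"
  shows "degree E z = 0"
proof -
  have "{f\<in>E. z \<in> f} = {}" using is_treeD(3)[OF assms(1)] assms(2) by blast
  then show ?thesis unfolding degree_def by (metis card.empty)
qed

text \<open>The leaf \<open>lf 0\<close> becomes an internal vertex carrying two new leaves, labelled \<open>0\<close> and \<open>n\<close>.\<close>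

lemma subcubic_tree_add_leaf:
  assumes T: "subcubic_tree_on {0..<n} (V, E, lf)" and n: "1 \<le> n"
  shows "\<exists>T'. subcubic_tree_on {0..<Suc n} T'"
proof -
  have tree: "is_tree V E" and degrees: "\<forall>v\<in>V. degree E v \<in> {1, 3}"
    and leaves: "bij_betw lf {0..<n} {v\<in>V. degree E v = 1}"
    using T by (simp_all add: subcubic_tree_on_def)
  define l where "l = lf 0"
  define m1 where "m1 = Suc (Max V)"
  define m2 where "m2 = Suc m1"
  have l: "l \<in> V" "degree E l = 1" using subcubic_tree_leaf_in[OF T] n by (auto simp: l_def)
  have m: "m1 \<notin> V" "m2 \<notin> insert m1 V" "m1 \<noteq> m2"
    using Max_ge[OF is_treeD(1)[OF tree]] by (force simp: m1_def m2_def)+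
  define V' where "V' = insert m2 (insert m1 V)"
  define E' where "E' = insert {l, m2} (insert {l, m1} E)"
  have tree': "is_tree V' E'"
    unfolding V'_def E'_def using tree l m by (intro is_tree_add_pendant) auto
  have new_edges: "{l, m1} \<notin> E" "{l, m2} \<notin> insert {l, m1} E"
    using m is_treeD(3)[OF tree] by (auto simp: doubleton_eq_iff)
  have degree': "degree E' z = (if z = l then 3 else if z \<in> {m1, m2} then 1 else degree E z)" for z
    using new_edges m l is_treeD(2)[OF tree] degree_outside[OF tree, of m1] degree_outside[OF tree, of m2]
    by (auto simp: E'_def degree_insert_edge)
  have leaves': "{v\<in>V'. degree E' v = 1} = ({v\<in>V. degree E v = 1} - {l}) \<union> {m1, m2}"
    using m l by (auto simp: V'_def degree')
  define lf' where "lf' = lf(0 := m1, n := m2)"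
  have "bij_betw lf ({0..<n} - {0}) ({v\<in>V. degree E v = 1} - {l})"
    using bij_betw_DiffI[OF leaves, of "{0}" "{l}"] n l by (simp add: l_def)
  then have old: "bij_betw lf' ({0..<n} - {0}) ({v\<in>V. degree E v = 1} - {l})"
    by (rule bij_betw_cong[THEN iffD1, rotated]) (simp add: lf'_def)
  have new: "bij_betw lf' {0, n} {m1, m2}"
    using n m by (auto simp: lf'_def bij_betw_def)
  have disjoint: "({v\<in>V. degree E v = 1} - {l}) \<inter> {m1, m2} = {}" using m by auto
  have labels: "({0..<n} - {0}) \<union> {0, n} = {0..<Suc n}" using n by auto
  from bij_betw_combine[OF old new disjoint, unfolded labels leaves'[symmetric]]
  have "bij_betw lf' {0..<Suc n} {v\<in>V'. degree E' v = 1}" .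
  moreover have "\<forall>v\<in>V'. degree E' v \<in> {1, 3}" using degrees by (auto simp: V'_def degree')
  ultimately have "subcubic_tree_on {0..<Suc n} (V', E', lf')"
    using tree' by (simp add: subcubic_tree_on_def)
  then show ?thesis ..
qed

lemma subcubic_tree_exists:
  assumes "2 \<le> n"
  shows "\<exists>T. subcubic_tree n T"
  unfolding subcubic_tree_eq using assms
proof (induction n rule: dec_induct)
  case base
  have "is_tree {0, 1} {{0 :: nat, 1}}"
    unfolding is_tree_def by (auto simp: insert_commute intro: r_into_rtrancl)
  moreover have degrees: "degree {{0 :: nat, 1}} v = 1" if "v \<in> {0, 1}" for v
  proof -
    have "{f\<in>{{0, 1}}. v \<in> f} = {{0 :: nat, 1}}" using that by auto
    then show ?thesis by (simp add: degree_def)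
  qed
  moreover have "{v\<in>{0, 1}. degree {{0, 1}} v = 1} = {0 :: nat, 1}" using degrees by blast
  moreover have "bij_betw id {0..<2} {0 :: nat, 1}" by (auto simp: bij_betw_def)
  ultimately have "subcubic_tree_on {0..<2} ({0, 1}, {{0, 1}}, id)"
    by (simp add: subcubic_tree_on_def)
  then show ?case ..
next
  case (step n)
  then show ?case using subcubic_tree_add_leaf by (metis prod_cases3 one_le_numeral order_trans)
qed

lemma subcubic_tree_induced:
  assumes T: "subcubic_tree N T" and sg: "inj_on sg {0..<n}" "sg ` {0..<n} \<subseteq> {0..<N}"
    and n: "2 \<le> n"
  obtains T' where "subcubic_tree n T'"
    and "\<And>e'. e' \<in> tree_edges T' \<Longrightarrow> \<exists>e\<in>tree_edges T.
      cut_side n T' e' = {j\<in>{0..<n}. sg j \<in> cut_side N T e} \<or>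
      cut_side n T' e' = {j\<in>{0..<n}. sg j \<notin> cut_side N T e}"
proof -
  obtain V E lf where VE: "T = (V, E, lf)" by (cases T)
  let ?S = "sg ` {0..<n}"
  have "card ?S = n" using card_image[OF sg(1)] by simp
  then obtain V' E' where T': "subcubic_tree_on ?S (V', E', lf)"
    and cuts: "cuts_inherited ?S (V', E', lf) {0..<N} (V, E, lf)"
    using subcubic_tree_restrict[of "{0..<N}" V E lf ?S] T sg(2) n
    by (auto simp: VE subcubic_tree_eq)
  have "bij_betw sg {0..<n} ?S" using sg(1) by (simp add: bij_betw_def)
  then have "subcubic_tree n (V', E', lf \<circ> sg)"
    using T' bij_betw_trans by (auto simp: subcubic_tree_eq subcubic_tree_on_def)
  moreover have "\<exists>e\<in>tree_edges T.
      cut_side n (V', E', lf \<circ> sg) e' = {j\<in>{0..<n}. sg j \<in> cut_side N T e} \<or>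
      cut_side n (V', E', lf \<circ> sg) e' = {j\<in>{0..<n}. sg j \<notin> cut_side N T e}"
    if e': "e' \<in> tree_edges (V', E', lf \<circ> sg)" for e'
  proof -
    have cut': "cut_side n (V', E', lf \<circ> sg) e' = {j\<in>{0..<n}. sg j \<in> cut_side_on ?S (V', E', lf) e'}"
      by (auto simp: cut_side_def cut_side_on_def)
    obtain e where "e \<in> tree_edges T"
      and "cut_side_on ?S (V', E', lf) e' = cut_side N T e \<inter> ?S \<or>
        cut_side_on ?S (V', E', lf) e' = ?S - cut_side N T e"
      using cuts e' by (auto simp: cuts_inherited_def tree_edges_def VE cut_side_eq)
    then show ?thesis unfolding cut' by auto
  qed
  ultimately show ?thesis using that by blast
qed

lemma subcubic_tree_edges:
  assumes "subcubic_tree n T" and "2 \<le> n"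
  shows "finite (tree_edges T)" and "tree_edges T \<noteq> {}"
proof -
  obtain V E lf where VE: "T = (V, E, lf)" by (cases T)
  have tree: "is_tree V E" and leaves: "bij_betw lf {0..<n} {v\<in>V. degree E v = 1}"
    using assms(1) by (simp_all add: VE subcubic_tree_def)
  show "finite (tree_edges T)" using is_treeD(2)[OF tree] by (simp add: VE tree_edges_def)
  have "n \<le> card V"
    using bij_betw_same_card[OF leaves] card_mono[OF is_treeD(1)[OF tree], of "{v\<in>V. degree E v = 1}"]
    by simp
  then have "E \<noteq> {}" using is_treeD(6)[OF tree] assms(2) by auto
  then show "tree_edges T \<noteq> {}" by (simp add: VE tree_edges_def)
qed

section \<open>Schmidt-rank width\<close>

definition width_along :: "nat \<Rightarrow> qvec \<Rightarrow> ltree \<Rightarrow> real" where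
  "width_along n psi T = Max {log 2 (real (schmidt_rank n (cut_side n T e) psi)) | e. e \<in> tree_edges T}"

lemma srw_eq_Min_width_along: "srw n psi = Min {width_along n psi T | T. subcubic_tree n T}"
  by (simp add: srw_def width_along_def)

lemma cut_side_subset: "cut_side n T e \<subseteq> {0..<n}"
  by (cases T) (auto simp: cut_side_def)

lemma width_along_attained:
  assumes "subcubic_tree n T" and "2 \<le> n"
  obtains e where "e \<in> tree_edges T"
    and "width_along n psi T = log 2 (real (schmidt_rank n (cut_side n T e) psi))"
proof -
  let ?W = "{log 2 (real (schmidt_rank n (cut_side n T e) psi)) | e. e \<in> tree_edges T}"
  have "Max ?W \<in> ?W" using subcubic_tree_edges[OF assms] by (intro Max_in) auto
  then show ?thesis using that by (auto simp: width_along_def)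
qed

lemma finite_widths:
  assumes "2 \<le> n"
  shows "finite {width_along n psi T | T. subcubic_tree n T}"
proof (rule finite_subset)
  show "{width_along n psi T | T. subcubic_tree n T} \<subseteq> (\<lambda>k. log 2 (real k)) ` {..2 ^ n}"
  proof clarify
    fix T assume T: "subcubic_tree n T"
    then obtain e where "width_along n psi T = log 2 (real (schmidt_rank n (cut_side n T e) psi))"
      using width_along_attained[OF T assms] by blast
    moreover have "schmidt_rank n (cut_side n T e) psi \<le> 2 ^ n"
      by (rule schmidt_rank_le_pow2[OF cut_side_subset])
    ultimately show "width_along n psi T \<in> (\<lambda>k. log 2 (real k)) ` {..2 ^ n}" by auto
  qed
qed simp

lemma srw_le_width_along:
  assumes "subcubic_tree n T" and "2 \<le> n"
  shows "srw n psi \<le> width_along n psi T"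
proof -
  have "width_along n psi T \<in> {width_along n psi T | T. subcubic_tree n T}" using assms(1) by blast
  then show ?thesis unfolding srw_eq_Min_width_along by (rule Min_le[OF finite_widths[OF assms(2)]])
qed

lemma srw_attained:
  assumes "2 \<le> n"
  obtains T where "subcubic_tree n T" and "srw n psi = width_along n psi T"
proof -
  have "{width_along n psi T | T. subcubic_tree n T} \<noteq> {}"
    using subcubic_tree_exists[OF assms] by blast
  then have "srw n psi \<in> {width_along n psi T | T. subcubic_tree n T}"
    unfolding srw_eq_Min_width_along by (rule Min_in[OF finite_widths[OF assms]])
  then show ?thesis using that by blast
qed

text \<open>This includes \<open>a = 0\<close>: \<open>log 2 0 = 0\<close> in Isabelle, as \<open>ln 0 = 0\<close>.\<close>

lemma log2_of_nat_mono:
  assumes "(a::nat) \<le> b"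
  shows "log 2 (real a) \<le> log 2 (real b)"
proof (cases "a = 0")
  case True
  then show ?thesis by (cases "b = 0") (simp_all add: log_def)
qed (use assms in simp)

lemma width_along_le:
  assumes T: "subcubic_tree n T" "2 \<le> n" and T': "subcubic_tree N T'" "2 \<le> N"
    and le: "\<And>e. e \<in> tree_edges T \<Longrightarrow> \<exists>e'\<in>tree_edges T'.
      schmidt_rank n (cut_side n T e) phi \<le> schmidt_rank N (cut_side N T' e') psi"
  shows "width_along n phi T \<le> width_along N psi T'"
proof -
  obtain e where e: "e \<in> tree_edges T"
    and width: "width_along n phi T = log 2 (real (schmidt_rank n (cut_side n T e) phi))"
    using width_along_attained[OF T] by blast
  obtain e' where e': "e' \<in> tree_edges T'"
    and rank: "schmidt_rank n (cut_side n T e) phi \<le> schmidt_rank N (cut_side N T' e') psi"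
    using le[OF e] by blast
  have "width_along n phi T \<le> log 2 (real (schmidt_rank N (cut_side N T' e') psi))"
    unfolding width by (rule log2_of_nat_mono[OF rank])
  also have "\<dots> \<le> width_along N psi T'"
    unfolding width_along_def using subcubic_tree_edges(1)[OF T'] e' by (intro Max_ge) auto
  finally show ?thesis .
qed

lemma srw_mono:
  assumes "2 \<le> n" and "\<And>A. A \<subseteq> {0..<n} \<Longrightarrow> schmidt_rank n A phi \<le> schmidt_rank n A psi"
  shows "srw n phi \<le> srw n psi"
proof -
  obtain T where T: "subcubic_tree n T" "srw n psi = width_along n psi T"
    using srw_attained[OF assms(1)] by blast
  have "srw n phi \<le> width_along n phi T" by (rule srw_le_width_along[OF T(1) assms(1)])
  also have "\<dots> \<le> width_along n psi T"
    using assms(2)[OF cut_side_subset] by (intro width_along_le[OF T(1) assms(1) T(1) assms(1)]) blast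
  finally show ?thesis using T(2) by simp
qed

lemma srw_embed_le:
  assumes n: "2 \<le> n" "n \<le> N" and sg: "inj_on sg {0..<n}" "sg ` {0..<n} \<subseteq> {0..<N}"
  shows "srw n psi' \<le> srw N (embed N n sg psi')"
proof -
  have N: "2 \<le> N" using n by simp
  obtain T where T: "subcubic_tree N T" "srw N (embed N n sg psi') = width_along N (embed N n sg psi') T"
    using srw_attained[OF N] by blast
  obtain T' where T': "subcubic_tree n T'"
    and cuts: "\<And>e'. e' \<in> tree_edges T' \<Longrightarrow> \<exists>e\<in>tree_edges T.
      cut_side n T' e' = {j\<in>{0..<n}. sg j \<in> cut_side N T e} \<or>
      cut_side n T' e' = {j\<in>{0..<n}. sg j \<notin> cut_side N T e}"
    using subcubic_tree_induced[OF T(1) sg n(1)] by blast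
  have "width_along n psi' T' \<le> width_along N (embed N n sg psi') T"
  proof (rule width_along_le[OF T' n(1) T(1) N])
    fix e' assume "e' \<in> tree_edges T'"
    then obtain e where e: "e \<in> tree_edges T" and cut:
      "cut_side n T' e' = {j\<in>{0..<n}. sg j \<in> cut_side N T e} \<or>
       cut_side n T' e' = {0..<n} - {j\<in>{0..<n}. sg j \<in> cut_side N T e}"
      using cuts by fastforce
    have "{j\<in>{0..<n}. sg j \<in> cut_side N T e} \<subseteq> {0..<n}" by blast
    from schmidt_rank_compl[OF this] cut
    have "schmidt_rank n (cut_side n T' e') psi' = schmidt_rank n {j\<in>{0..<n}. sg j \<in> cut_side N T e} psi'"
      by (elim disjE) simp_all
    also have "\<dots> \<le> schmidt_rank N (cut_side N T e) (embed N n sg psi')"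
      by (rule schmidt_rank_embed_le[OF sg cut_side_subset])
    finally show "\<exists>e\<in>tree_edges T.
        schmidt_rank n (cut_side n T' e') psi' \<le> schmidt_rank N (cut_side N T e) (embed N n sg psi')"
      using e by blast
  qed
  then show ?thesis using srw_le_width_along[OF T' n(1), of psi'] T(2) by simp
qed

lemma srw_le_of_embed_rank_le:
  assumes n: "2 \<le> n" "n \<le> N" and sg: "inj_on sg {0..<n}" "sg ` {0..<n} \<subseteq> {0..<N}"
    and le: "\<And>A. A \<subseteq> {0..<N} \<Longrightarrow> schmidt_rank N A (embed N n sg psi') \<le> schmidt_rank N A psi"
  shows "srw n psi' \<le> srw N psi"
  using order_trans[OF srw_embed_le[OF n sg] srw_mono[OF _ le]] n by simp

lemma schmidt_rank_scaled_eq: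
  assumes "A \<subseteq> {0..<n}" and "c \<noteq> 0" and "\<And>z. z \<in> cfg {0..<n} \<Longrightarrow> v z = c * w z"
  shows "schmidt_rank n A v = schmidt_rank n A w"
  using schmidt_rank_cong[OF assms(1) assms(3)] schmidt_rank_scale[OF assms(1,2)] by simp

lemma srw_slocc_le:
  assumes n: "2 \<le> n" "n \<le> N" and "slocc_to N psi n psi'"
  shows "srw n psi' \<le> srw N psi"
proof -
  obtain K sg c where c: "c \<noteq> 0" and sg: "inj_on sg {0..<n}" "sg ` {0..<n} \<subseteq> {0..<N}"
    and eq: "\<And>z. z \<in> cfg {0..<N} \<Longrightarrow> apply_prod N K psi z = c * embed N n sg psi' z"
    using assms(3) unfolding slocc_to_def by blast
  show ?thesis
  proof (rule srw_le_of_embed_rank_le[OF n sg])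
    fix A assume A: "A \<subseteq> {0..<N}"
    have "schmidt_rank N A (embed N n sg psi') = schmidt_rank N A (apply_prod N K psi)"
      using schmidt_rank_scaled_eq[OF A c eq] by simp
    also have "\<dots> \<le> schmidt_rank N A psi" by (rule schmidt_rank_apply_prod_le[OF A])
    finally show "schmidt_rank N A (embed N n sg psi') \<le> schmidt_rank N A psi" .
  qed
qed

section \<open>LOCC protocols\<close>

lemma sum_cmod_square_kraus:
  assumes "kraus_complete Ks"
  shows "(\<Sum>j<length Ks. \<Sum>c\<in>UNIV. (cmod (\<Sum>b\<in>UNIV. (Ks ! j) c b * ps b))\<^sup>2) = (\<Sum>b\<in>UNIV. (cmod (ps b))\<^sup>2)"
proof -
  let ?K = "\<lambda>a b. \<Sum>j<length Ks. \<Sum>c\<in>UNIV. cnj ((Ks ! j) c a) * (Ks ! j) c b"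
  have K: "?K a b = (if a = b then 1 else 0)" for a b
    using assms unfolding kraus_complete_def by (simp add: sum_list_sum_nth atLeast0LessThan)
  have square: "complex_of_real ((cmod z)\<^sup>2) = cnj z * z" for z
    using complex_norm_square[of z] by (simp add: mult.commute)
  have "complex_of_real (\<Sum>j<length Ks. \<Sum>c\<in>UNIV. (cmod (\<Sum>b\<in>UNIV. (Ks ! j) c b * ps b))\<^sup>2) =
      (\<Sum>j<length Ks. \<Sum>c\<in>UNIV. \<Sum>b\<in>UNIV. \<Sum>a\<in>UNIV. cnj (ps a) * ps b * (cnj ((Ks ! j) c a) * (Ks ! j) c b))"
    unfolding of_real_sum square by (simp add: cnj_sum sum_product mult_ac)
  also have "\<dots> = (\<Sum>j<length Ks. \<Sum>b\<in>UNIV. \<Sum>a\<in>UNIV. \<Sum>c\<in>UNIV.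
      cnj (ps a) * ps b * (cnj ((Ks ! j) c a) * (Ks ! j) c b))"
    by (rule sum.cong[OF refl], subst sum.swap, rule sum.cong[OF refl], rule sum.swap)
  also have "\<dots> = (\<Sum>b\<in>UNIV. \<Sum>a\<in>UNIV. \<Sum>j<length Ks. \<Sum>c\<in>UNIV.
      cnj (ps a) * ps b * (cnj ((Ks ! j) c a) * (Ks ! j) c b))"
    by (subst sum.swap) (rule sum.cong[OF refl], rule sum.swap)
  also have "\<dots> = (\<Sum>b\<in>UNIV. \<Sum>a\<in>UNIV. cnj (ps a) * ps b * ?K a b)"
    by (simp add: sum_distrib_left)
  also have "\<dots> = complex_of_real (\<Sum>b\<in>UNIV. (cmod (ps b))\<^sup>2)"
  proof -
    have "(\<Sum>a\<in>UNIV. cnj (ps a) * ps b * (if a = b then 1 else 0)) = cnj (ps b) * ps b" for b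
      by (cases b) (simp_all add: UNIV_bool)
    then show ?thesis unfolding K of_real_sum square by simp
  qed
  finally show ?thesis by (simp only: of_real_eq_iff)
qed

lemma sum_norm2_apply_local:
  assumes "kraus_complete Ks" and "k < n"
  shows "(\<Sum>j<length Ks. norm2 n (apply_local k (Ks ! j) psi)) = norm2 n psi"
proof -
  let ?S = "{0..<n} - {k}"
  have norm2_split: "norm2 n v = (\<Sum>y\<in>cfg ?S. \<Sum>c\<in>UNIV. (cmod (v (y(k := c))))\<^sup>2)" for v
  proof -
    have S: "insert k ?S = {0..<n}" using assms(2) by auto
    have "norm2 n v = (\<Sum>z\<in>cfg (insert k ?S). (cmod (v z))\<^sup>2)"
      by (simp only: norm2_def S)
    also have "\<dots> = (\<Sum>c\<in>UNIV. \<Sum>y\<in>cfg ?S. (cmod (v (y(k := c))))\<^sup>2)"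
      by (rule sum_cfg_insert) simp
    also have "\<dots> = (\<Sum>y\<in>cfg ?S. \<Sum>c\<in>UNIV. (cmod (v (y(k := c))))\<^sup>2)"
      by (rule sum.swap)
    finally show ?thesis .
  qed
  have "(\<Sum>j<length Ks. norm2 n (apply_local k (Ks ! j) psi)) =
      (\<Sum>y\<in>cfg ?S. \<Sum>j<length Ks. \<Sum>c\<in>UNIV. (cmod (\<Sum>b\<in>UNIV. (Ks ! j) c b * psi (y(k := b))))\<^sup>2)"
    unfolding norm2_split by (simp add: apply_local_def sum.swap[of _ "cfg ?S"])
  also have "\<dots> = (\<Sum>y\<in>cfg ?S. \<Sum>b\<in>UNIV. (cmod (psi (y(k := b))))\<^sup>2)"
    using sum_cmod_square_kraus[OF assms(1)] by simp
  also have "\<dots> = norm2 n psi"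
    by (simp add: norm2_split)
  finally show ?thesis .
qed

lemma norm2_nonneg: "0 \<le> norm2 n v"
  unfolding norm2_def by (rule sum_nonneg) simp

lemma schmidt_rank_normalize_le:
  assumes "A \<subseteq> {0..<n}"
  shows "schmidt_rank n A (normalize n v) \<le> schmidt_rank n A v"
proof -
  have "normalize n v = (\<lambda>z. inverse (complex_of_real (sqrt (norm2 n v))) * v z)"
    by (simp add: normalize_def fun_eq_iff divide_inverse mult.commute)
  then show ?thesis using schmidt_rank_scale_le[OF assms] by simp
qed

lemma schmidt_rank_measurement_le:
  assumes "A \<subseteq> {0..<n}" and "k < n"
  shows "schmidt_rank n A (normalize n (apply_local k K psi)) \<le> schmidt_rank n A psi"
  using schmidt_rank_normalize_le[OF assms(1)] schmidt_rank_apply_local_le[OF assms] by (rule order_trans)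

lemma measurement_outcome_exists:
  assumes "qstate n psi" and "k < n" and "kraus_complete Ks"
  obtains j where "j < length Ks" and "0 < norm2 n (apply_local k (Ks ! j) psi)"
proof -
  have "(\<Sum>j<length Ks. norm2 n (apply_local k (Ks ! j) psi)) = 1"
    using sum_norm2_apply_local[OF assms(3,2)] assms(1) by (simp add: qstate_def)
  then have "\<exists>j<length Ks. norm2 n (apply_local k (Ks ! j) psi) \<noteq> 0"
    by (metis (no_types, lifting) lessThan_iff sum.neutral zero_neq_one)
  then show ?thesis using that norm2_nonneg by (metis less_eq_real_def)
qed

lemma locc_nonempty: "locc n psi L \<Longrightarrow> L \<noteq> []"
proof (induction rule: locc.induct)
  case (locc_round psi k Ks Ls)
  obtain j where j: "j < length Ks" "0 < norm2 n (apply_local k (Ks ! j) psi)"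
    using measurement_outcome_exists[OF locc_round(1-3)] .
  let ?L = "\<lambda>j. if 0 < norm2 n (apply_local k (Ks ! j) psi)
    then map (\<lambda>(q, phi). (norm2 n (apply_local k (Ks ! j) psi) * q, phi)) (Ls j) else []"
  have "Ls j \<noteq> []" using j locc_round(4) by blast
  then have "?L j \<noteq> []" using j by simp
  moreover have "?L j \<in> set (map ?L [0..<length Ks])" using j by simp
  ultimately show ?case by (subst concat_eq_Nil_conv) blast
qed simp

lemma locc_schmidt_rank_le:
  assumes "locc n psi L" and "(p, phi) \<in> set L" and "A \<subseteq> {0..<n}"
  shows "schmidt_rank n A phi \<le> schmidt_rank n A psi"
  using assms(1,2)
proof (induction arbitrary: p rule: locc.induct)
  case (locc_round psi k Ks Ls)
  then obtain j q where j: "j < length Ks" "0 < norm2 n (apply_local k (Ks ! j) psi)"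
    and "(q, phi) \<in> set (Ls j)"
    by (auto split: if_splits)
  then have "schmidt_rank n A phi \<le> schmidt_rank n A (normalize n (apply_local k (Ks ! j) psi))"
    using locc_round(4) by blast
  also have "\<dots> \<le> schmidt_rank n A psi"
    by (rule schmidt_rank_measurement_le[OF assms(3) locc_round(2)])
  finally show ?case .
qed simp

lemma sum_list_map_concat: "sum_list (map f (concat xss)) = (\<Sum>xs\<leftarrow>xss. sum_list (map f xs))"
  by (induction xss) auto

lemma locc_expected_srw_le:
  assumes "locc n psi L" and "2 \<le> n"
  shows "(\<Sum>(p, phi)\<leftarrow>L. p * srw n phi) \<le> srw n psi"
  using assms
proof (induction rule: locc.induct)
  case (locc_round psi k Ks Ls)
  let ?p = "\<lambda>j. norm2 n (apply_local k (Ks ! j) psi)"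
  let ?f = "\<lambda>(p, phi). p * srw n phi"
  let ?L = "\<lambda>j. if 0 < ?p j then map (\<lambda>(q, phi). (?p j * q, phi)) (Ls j) else []"
  have branch: "sum_list (map ?f (?L j)) \<le> ?p j * srw n psi" if "j < length Ks" for j
  proof (cases "0 < ?p j")
    case True
    have "sum_list (map ?f (?L j)) = ?p j * sum_list (map ?f (Ls j))"
      using True by (simp add: case_prod_beta' o_def mult.assoc sum_list_const_mult)
    also have "\<dots> \<le> ?p j * srw n (normalize n (apply_local k (Ks ! j) psi))"
      using locc_round(4) that True locc_round(5) by (intro mult_left_mono) auto
    also have "\<dots> \<le> ?p j * srw n psi"
      using schmidt_rank_measurement_le[OF _ locc_round(2)] True
      by (intro mult_left_mono srw_mono[OF locc_round(5)]) auto
    finally show ?thesis .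
  next
    case False
    then have "?p j = 0" using norm2_nonneg[of n "apply_local k (Ks ! j) psi"] by simp
    then show ?thesis by simp
  qed
  have "(\<Sum>(p, phi)\<leftarrow>concat (map ?L [0..<length Ks]). p * srw n phi) = (\<Sum>j<length Ks. sum_list (map ?f (?L j)))"
    by (simp add: sum_list_map_concat interv_sum_list_conv_sum_set_nat atLeast0LessThan)
  also have "\<dots> \<le> (\<Sum>j<length Ks. ?p j * srw n psi)"
    using branch by (intro sum_mono) simp
  also have "\<dots> = srw n psi"
    using sum_norm2_apply_local[OF locc_round(3,2)] locc_round(1)
    by (simp add: qstate_def sum_distrib_right[symmetric])
  finally show ?case .
qed simp

lemma srw_locc_geq_le:
  assumes n: "2 \<le> n" and "locc_geq N psi n psi'"
  shows "srw n psi' \<le> srw N psi"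
proof -
  obtain sg L where nN: "n \<le> N" and sg: "inj_on sg {0..<n}" "sg ` {0..<n} \<subseteq> {0..<N}"
    and L: "locc N psi L"
    and outcomes: "\<forall>(p, phi)\<in>set L. \<exists>c. cmod c = 1 \<and> (\<forall>z\<in>cfg {0..<N}. phi z = c * embed N n sg psi' z)"
    using assms(2) unfolding locc_geq_def by blast
  obtain p phi where pphi: "(p, phi) \<in> set L" using locc_nonempty[OF L] by (cases L) auto
  with outcomes obtain c where "cmod c = 1" and phi: "\<forall>z\<in>cfg {0..<N}. phi z = c * embed N n sg psi' z"
    by blast
  then have "c \<noteq> 0" by auto
  show ?thesis
  proof (rule srw_le_of_embed_rank_le[OF n nN sg])
    fix A assume A: "A \<subseteq> {0..<N}"
    have "schmidt_rank N A (embed N n sg psi') = schmidt_rank N A phi"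
      using schmidt_rank_scaled_eq[OF A \<open>c \<noteq> 0\<close> phi[rule_format]] by simp
    also have "\<dots> \<le> schmidt_rank N A psi" by (rule locc_schmidt_rank_le[OF L pphi A])
    finally show "schmidt_rank N A (embed N n sg psi') \<le> schmidt_rank N A psi" .
  qed
qed

theorem theorem4:
  shows "(\<forall>N n psi psi'. 2 \<le> n \<longrightarrow> n \<le> N \<longrightarrow> qstate N psi \<longrightarrow> qstate n psi' \<longrightarrow>
            slocc_to N psi n psi' \<longrightarrow> srw N psi \<ge> srw n psi')
         \<and> type_I_monotone srw \<and> type_II_monotone srw"
proof (intro conjI)
  show "\<forall>N n psi psi'. 2 \<le> n \<longrightarrow> n \<le> N \<longrightarrow> qstate N psi \<longrightarrow> qstate n psi' \<longrightarrow>
      slocc_to N psi n psi' \<longrightarrow> srw N psi \<ge> srw n psi'"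
    using srw_slocc_le by blast
  show "type_I_monotone srw"
    unfolding type_I_monotone_def using locc_expected_srw_le by blast
  show "type_II_monotone srw"
    unfolding type_II_monotone_def using srw_locc_geq_le by blast
qed

end
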